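(* Let $A=\sigma(R)\langle x_1,\dots,x_n\rangle$ be a $\sigma$-PBW extension such that $c_{\alpha,\beta}$ is invertible for all $\alpha,\beta\in\mathbb N^n$. Let $\mathbf f,\mathbf h\in A^m$, let $\theta\in\mathbb N^n$, and let $F=\{\mathbf f_1,\dots,\mathbf f_t\}$ be a finite set of nonzero vectors of $A^m$. Then: (i) If $\mathbf f\xrightarrow{F}\mathbf h$, then there exists $\mathbf p\in A^m$ with $\mathbf p=\mathbf 0$ or $lm(x^\theta\mathbf f)\succ lm(\mathbf p)$ such that $x^\theta\mathbf f+\mathbf p\xrightarrow{F}x^\theta\mathbf h$. If $A$ is quasi-commutative, one can take $\mathbf p=\mathbf 0$. (ii) If $\mathbf f\xrightarrow{F}_+\mathbf h$ and $\mathbf p\in A^m$ satisfies $\mathbf p=\mathbf 0$ or $lm(\mathbf h)\succ lm(\mathbf p)$, then $\mathbf f+\mathbf p\xrightarrow{F}_+\mathbf h+\mathbf p$. (iii) If $\mathbf f\xrightarrow{F}_+\mathbf h$, then there exists $\mathbf p\in A^m$ with $\mathbf p=\mathbf 0$ or $lm(x^\theta\mathbf f)\succ lm(\mathbf p)$ such that $x^\theta\mathbf f+\mathbf p\xrightarrow{F}_+x^\theta\mathbf h$. If $A$ is quasi-commutative, one can take $\mathbf p=\mathbf 0$. (iv) If $\mathbf f\xrightarrow{F}_+\mathbf 0$, then there exists $\mathbf p\in A^m$ with $\mathbf p=\mathbf 0$ or $lm(x^\theta\mathbf f)\succ lm(\mathbf p)$ such that $x^\theta\mathbf f+\mathbf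 p\xrightarrow{F}_+\mathbf 0$. If $A$ is quasi-commutative, one can take $\mathbf p=\mathbf 0$.
   Context: Let $R\subseteq A$ be rings. $A$ is a $\sigma$-PBW extension of $R$, written $A=\sigma(R)\langle x_1,\dots,x_n\rangle$, if there are $x_1,\dots,x_n\in A\setminus R$ such that: (i) $A$ is a free left $R$-module with basis $\mathrm{Mon}(A)=\{x^\alpha=x_1^{\alpha_1}\cdots x_n^{\alpha_n}:\alpha\in\mathbb N^n\}$, with $x^0=1$; (ii) for every $i$ and every $r\in R\setminus\{0\}$ there is $c_{i,r}\in R\setminus\{0\}$ with $x_ir-c_{i,r}x_i\in R$; (iii) for all $i,j$ there is $c_{i,j}\in R\setminus\{0\}$ with $x_jx_i-c_{i,j}x_ix_j\in R+Rx_1+\dots+Rx_n$. There are injective ring endomorphisms $\sigma_i$ of $R$ and $\sigma_i$-derivations $\delta_i$ with $x_ir=\sigma_i(r)x_i+\delta_i(r)$. Write $\sigma^\alpha=\sigma_1^{\alpha_1}\circ\cdots\circ\sigma_n^{\alpha_n}$ and $|\alpha|=\sum\alpha_i$. The degree of a nonzero element of $A$ is the maximum of $|\alpha|$ over the monomials $x^\alpha$ occurring in it. For $\alpha,\beta\in\mathbb N^n$ there are unique $c_{\alpha,\beta}\in R$ (left invertible) and $p_{\alpha,\beta}\in A$ with $x^\alpha x^\beta=c_{\alpha,\beta}x^{\alpha+\beta}+p_{\alpha,\beta}$, where $p_{\alpha,\beta}=0$ or $\deg p_{\alpha,\beta}<|\alpha+\beta|$. $A$ is quasi-commutative if $x_ir=c_{i,r}x_i$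 and $x_jx_i=c_{i,j}x_ix_j$ exactly. Standing assumptions: $R$ is left Gröbner soluble (left Noetherian; membership of $a$ in a left ideal $Rr_1+\dots+Rr_m$ is decidable, with coefficients computable; and finite generating sets of $\mathrm{Syz}_R[r_1\cdots r_m]=\{(b_1,\dots,b_m)\in R^m:\sum b_ir_i=0\}$ are computable). $\mathrm{Mon}(A)$ carries a monomial order, i.e. a total order $\succeq$ with: (a) $x^\beta\succeq x^\alpha\Rightarrow lm(x^\gamma x^\beta x^\lambda)\succeq lm(x^\gamma x^\alpha x^\lambda)$; (b) $x^\alpha\succeq1$; (c) $|\beta|\ge|\alpha|\Rightarrow x^\beta\succeq x^\alpha$. $A^m$ is the free left $A$-module of column vectors with canonical basis $\mathbf e_i$. A monomial of $A^m$ is $x^\alpha\mathbf e_i$, with $\mathrm{ind}=i$, $\exp=\alpha$, $\deg=|\alpha|$. The monomial $x^\alpha\mathbf e_i$ divides $x^\beta\mathbf e_j$ iff $i=j$ and $\beta_k\ge\alpha_k$ for all $k$. $\mathrm{Mon}(A^m)$ carries a monomial order, i.e. a total order with: (i) $lm(x^\beta x^\alpha)\mathbf e_i\succeq x^\alpha\mathbf e_i$; (ii) $x^\beta\mathbf e_j\succeq x^\alpha\mathbf e_i\Rightarrow lm(x^\gamma x^\beta)\mathbf e_j\succeq lm(x^\gamma x^\alpha)\mathbf e_i$; (iii) $\deg\mathbf X\ge\deg\mathbf Y\Rightarrow\mathbf X\succeq\mathbf Y$. Writing a nonzero $\mathbf f=c_1\mathbf X_1+\dots+c_t\mathbf X_t$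 with $c_i\in R\setminus\{0\}$ and $\mathbf X_1\succ\dots\succ\mathbf X_t$, set $lm(\mathbf f)=\mathbf X_1$, $lc(\mathbf f)=c_1$, $lt(\mathbf f)=c_1\mathbf X_1$. Also $lm(\mathbf 0)=\mathbf 0$, and $\mathbf X\succ\mathbf 0$ for every monomial $\mathbf X$. Reduction. Let $F$ be a finite set of nonzero vectors of $A^m$ and $\mathbf f,\mathbf h\in A^m$. We say $\mathbf f$ reduces to $\mathbf h$ by $F$ in one step, $\mathbf f\xrightarrow{F}\mathbf h$, if there are $\mathbf f_1,\dots,\mathbf f_t\in F$ and $r_1,\dots,r_t\in R$ with: (1) $lm(\mathbf f_i)\mid lm(\mathbf f)$, i.e. $\mathrm{ind}(lm\,\mathbf f_i)=\mathrm{ind}(lm\,\mathbf f)$ and $\alpha_i+\exp(lm\,\mathbf f_i)=\exp(lm\,\mathbf f)$ for some $\alpha_i\in\mathbb N^n$; (2) $lc(\mathbf f)=\sum_i r_i\sigma^{\alpha_i}(lc(\mathbf f_i))c_{\alpha_i,\exp(lm(\mathbf f_i))}$; (3) $\mathbf h=\mathbf f-\sum_i r_ix^{\alpha_i}\mathbf f_i$. By convention $\mathbf 0\xrightarrow{F}\mathbf 0$. We write $\mathbf f\xrightarrow{F}_+\mathbf h$ if there is a finite chain $\mathbf f\xrightarrow{F}\mathbf h_1\xrightarrow{F}\cdots\xrightarrow{F}\mathbf h$ of one-step reductions. *)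

theory Defs
  imports Main
begin

text \<open>Ring A is the ambient type 'a (ring_1); R is a subring; x i (i < n) are the
  variables x_1..x_n (indexed 0..n-1). Monomials of A^m are pairs (alpha, i) meaning x^alpha e_i.\<close>

definition exps :: "nat \<Rightarrow> (nat \<Rightarrow> nat) set" where
  "exps n = {\<alpha>. \<forall>i\<ge>n. \<alpha> i = 0}"

definition deg_exp :: "nat \<Rightarrow> (nat \<Rightarrow> nat) \<Rightarrow> nat" where
  "deg_exp n \<alpha> = (\<Sum>i<n. \<alpha> i)"

definition add_exp :: "(nat \<Rightarrow> nat) \<Rightarrow> (nat \<Rightarrow> nat) \<Rightarrow> (nat \<Rightarrow> nat)" where
  "add_exp \<alpha> \<beta> = (\<lambda>k. \<alpha> k + \<beta> k)"

definition unit_exp :: "nat \<Rightarrow> (nat \<Rightarrow> nat)" where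
  "unit_exp i = (\<lambda>k. if k = i then 1 else 0)"

definition xmon :: "(nat \<Rightarrow> 'a::ring_1) \<Rightarrow> nat \<Rightarrow> (nat \<Rightarrow> nat) \<Rightarrow> 'a" where
  "xmon x n \<alpha> = foldr (\<lambda>i acc. x i ^ \<alpha> i * acc) [0..<n] 1"

definition subring :: "'a::ring_1 set \<Rightarrow> bool" where
  "subring R \<longleftrightarrow> 0 \<in> R \<and> 1 \<in> R \<and> (\<forall>a\<in>R. \<forall>b\<in>R. a + b \<in> R \<and> a - b \<in> R \<and> a * b \<in> R)"

definition left_ideal :: "'a::ring_1 set \<Rightarrow> 'a set \<Rightarrow> bool" where
  "left_ideal R I \<longleftrightarrow> I \<subseteq> R \<and> 0 \<in> I \<and> (\<forall>a\<in>I. \<forall>b\<in>I. a + b \<in> I)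
     \<and> (\<forall>r\<in>R. \<forall>a\<in>I. r * a \<in> I)"

definition left_noetherian :: "'a::ring_1 set \<Rightarrow> bool" where
  "left_noetherian R \<longleftrightarrow> (\<forall>I. left_ideal R I \<longrightarrow>
     (\<exists>S. finite S \<and> S \<subseteq> I \<and> I = {\<Sum>s\<in>S. c s * s | c. \<forall>s. c s \<in> R}))"

definition unit_in :: "'a::ring_1 set \<Rightarrow> 'a \<Rightarrow> bool" where
  "unit_in R c \<longleftrightarrow> c \<in> R \<and> (\<exists>d\<in>R. d * c = 1 \<and> c * d = 1)"

definition is_rep :: "'a::ring_1 set \<Rightarrow> nat \<Rightarrow> ((nat \<Rightarrow> nat) \<Rightarrow> 'a) \<Rightarrow> bool" where
  "is_rep R n c \<longleftrightarrow> finite {\<alpha>. c \<alpha> \<noteq> 0} \<and> (\<forall>\<alpha>. c \<alpha> \<noteq> 0 \<longrightarrow> \<alpha> \<in> exps n \<and> c \<alpha> \<in> R)"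

definition rep_sum :: "(nat \<Rightarrow> 'a::ring_1) \<Rightarrow> nat \<Rightarrow> ((nat \<Rightarrow> nat) \<Rightarrow> 'a) \<Rightarrow> 'a" where
  "rep_sum x n c = (\<Sum>\<alpha>\<in>{\<alpha>. c \<alpha> \<noteq> 0}. c \<alpha> * xmon x n \<alpha>)"

definition sigma_PBW :: "'a::ring_1 set \<Rightarrow> (nat \<Rightarrow> 'a) \<Rightarrow> nat \<Rightarrow> bool" where
  "sigma_PBW R x n \<longleftrightarrow> subring R \<and> (\<forall>i<n. x i \<notin> R)
    \<and> (\<forall>a. \<exists>!c. is_rep R n c \<and> a = rep_sum x n c)
    \<and> (\<forall>i<n. \<forall>r\<in>R. r \<noteq> 0 \<longrightarrow> (\<exists>c\<in>R. c \<noteq> 0 \<and> x i * r - c * x i \<in> R))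
    \<and> (\<forall>i<n. \<forall>j<n. \<exists>c\<in>R. c \<noteq> 0 \<and>
         x j * x i - c * x i * x j \<in> {r0 + (\<Sum>k<n. rk k * x k) | r0 rk. r0 \<in> R \<and> (\<forall>k<n. rk k \<in> R)})"

definition quasi_comm :: "'a::ring_1 set \<Rightarrow> (nat \<Rightarrow> 'a) \<Rightarrow> nat \<Rightarrow> bool" where
  "quasi_comm R x n \<longleftrightarrow>
     (\<forall>i<n. \<forall>r\<in>R. r \<noteq> 0 \<longrightarrow> (\<exists>c\<in>R. c \<noteq> 0 \<and> x i * r = c * x i))
   \<and> (\<forall>i<n. \<forall>j<n. \<exists>c\<in>R. c \<noteq> 0 \<and> x j * x i = c * x i * x j)"

definition coeffs :: "'a::ring_1 set \<Rightarrow> (nat \<Rightarrow> 'a) \<Rightarrow> nat \<Rightarrow> 'a \<Rightarrow> (nat \<Rightarrow> nat) \<Rightarrow> 'a" where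
  "coeffs R x n a = (THE c. is_rep R n c \<and> a = rep_sum x n c)"

definition supp :: "'a::ring_1 set \<Rightarrow> (nat \<Rightarrow> 'a) \<Rightarrow> nat \<Rightarrow> 'a \<Rightarrow> (nat \<Rightarrow> nat) set" where
  "supp R x n a = {\<alpha>. coeffs R x n a \<alpha> \<noteq> 0}"

definition lmA :: "'a::ring_1 set \<Rightarrow> (nat \<Rightarrow> 'a) \<Rightarrow> nat \<Rightarrow> ((nat \<Rightarrow> nat) \<Rightarrow> (nat \<Rightarrow> nat) \<Rightarrow> bool)
     \<Rightarrow> 'a \<Rightarrow> (nat \<Rightarrow> nat)" where
  "lmA R x n le a = (THE \<alpha>. \<alpha> \<in> supp R x n a \<and> (\<forall>\<beta>\<in>supp R x n a. le \<beta> \<alpha>))"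

definition cab :: "'a::ring_1 set \<Rightarrow> (nat \<Rightarrow> 'a) \<Rightarrow> nat \<Rightarrow> (nat \<Rightarrow> nat) \<Rightarrow> (nat \<Rightarrow> nat) \<Rightarrow> 'a" where
  "cab R x n \<alpha> \<beta> = coeffs R x n (xmon x n \<alpha> * xmon x n \<beta>) (add_exp \<alpha> \<beta>)"

text \<open>sigma_i(r): the coefficient of x_i in x_i r = sigma_i(r) x_i + delta_i(r).\<close>
definition sigma :: "'a::ring_1 set \<Rightarrow> (nat \<Rightarrow> 'a) \<Rightarrow> nat \<Rightarrow> nat \<Rightarrow> 'a \<Rightarrow> 'a" where
  "sigma R x n i r = coeffs R x n (x i * r) (unit_exp i)"

definition sigma_pow :: "'a::ring_1 set \<Rightarrow> (nat \<Rightarrow> 'a) \<Rightarrow> nat \<Rightarrow> (nat \<Rightarrow> nat) \<Rightarrow> 'a \<Rightarrow> 'a" where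
  "sigma_pow R x n \<alpha> = foldr (\<lambda>i g. (sigma R x n i ^^ \<alpha> i) \<circ> g) [0..<n] id"

text \<open>Monomial order on Mon(A); le \<beta> \<alpha> means x^\<alpha> \<succeq> x^\<beta>.
  Degree compatibility (c) is read with strict degree inequality.\<close>
definition mon_order_A :: "'a::ring_1 set \<Rightarrow> (nat \<Rightarrow> 'a) \<Rightarrow> nat
     \<Rightarrow> ((nat \<Rightarrow> nat) \<Rightarrow> (nat \<Rightarrow> nat) \<Rightarrow> bool) \<Rightarrow> bool" where
  "mon_order_A R x n le \<longleftrightarrow>
     (\<forall>\<alpha>\<in>exps n. le \<alpha> \<alpha>)
   \<and> (\<forall>\<alpha>\<in>exps n. \<forall>\<beta>\<in>exps n. le \<alpha> \<beta> \<and> le \<beta> \<alpha> \<longrightarrow> \<alpha> = \<beta>)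
   \<and> (\<forall>\<alpha>\<in>exps n. \<forall>\<beta>\<in>exps n. \<forall>\<gamma>\<in>exps n. le \<alpha> \<beta> \<and> le \<beta> \<gamma> \<longrightarrow> le \<alpha> \<gamma>)
   \<and> (\<forall>\<alpha>\<in>exps n. \<forall>\<beta>\<in>exps n. le \<alpha> \<beta> \<or> le \<beta> \<alpha>)
   \<and> (\<forall>\<alpha>\<in>exps n. \<forall>\<beta>\<in>exps n. \<forall>\<gamma>\<in>exps n. \<forall>\<mu>\<in>exps n. le \<alpha> \<beta> \<longrightarrow>
        le (lmA R x n le (xmon x n \<gamma> * xmon x n \<alpha> * xmon x n \<mu>))
           (lmA R x n le (xmon x n \<gamma> * xmon x n \<beta> * xmon x n \<mu>)))
   \<and> (\<forall>\<alpha>\<in>exps n. le (\<lambda>_. 0) \<alpha>)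
   \<and> (\<forall>\<alpha>\<in>exps n. \<forall>\<beta>\<in>exps n. deg_exp n \<alpha> < deg_exp n \<beta> \<longrightarrow> le \<alpha> \<beta>)"

text \<open>Monomial order on Mon(A^m); leM Y X means X \<succeq> Y, monomials (alpha, i) with i < m.\<close>
definition mon_order_M :: "'a::ring_1 set \<Rightarrow> (nat \<Rightarrow> 'a) \<Rightarrow> nat \<Rightarrow> nat
     \<Rightarrow> ((nat \<Rightarrow> nat) \<Rightarrow> (nat \<Rightarrow> nat) \<Rightarrow> bool)
     \<Rightarrow> ((nat \<Rightarrow> nat) \<times> nat \<Rightarrow> (nat \<Rightarrow> nat) \<times> nat \<Rightarrow> bool) \<Rightarrow> bool" where
  "mon_order_M R x n m le leM \<longleftrightarrow>
     (let M = exps n \<times> {..<m} in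
       (\<forall>X\<in>M. leM X X)
     \<and> (\<forall>X\<in>M. \<forall>Y\<in>M. leM X Y \<and> leM Y X \<longrightarrow> X = Y)
     \<and> (\<forall>X\<in>M. \<forall>Y\<in>M. \<forall>Z\<in>M. leM X Y \<and> leM Y Z \<longrightarrow> leM X Z)
     \<and> (\<forall>X\<in>M. \<forall>Y\<in>M. leM X Y \<or> leM Y X)
     \<and> (\<forall>\<alpha>\<in>exps n. \<forall>\<beta>\<in>exps n. \<forall>i<m.
          leM (\<alpha>, i) (lmA R x n le (xmon x n \<beta> * xmon x n \<alpha>), i))
     \<and> (\<forall>\<alpha>\<in>exps n. \<forall>\<beta>\<in>exps n. \<forall>\<gamma>\<in>exps n. \<forall>i<m. \<forall>j<m. leM (\<alpha>, i) (\<beta>, j) \<longrightarrow>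
          leM (lmA R x n le (xmon x n \<gamma> * xmon x n \<alpha>), i) (lmA R x n le (xmon x n \<gamma> * xmon x n \<beta>), j))
     \<and> (\<forall>\<alpha>\<in>exps n. \<forall>\<beta>\<in>exps n. \<forall>i<m. \<forall>j<m.
          deg_exp n \<alpha> < deg_exp n \<beta> \<longrightarrow> leM (\<alpha>, i) (\<beta>, j)))"

definition vec_in :: "nat \<Rightarrow> (nat \<Rightarrow> 'a::ring_1) \<Rightarrow> bool" where
  "vec_in m f \<longleftrightarrow> (\<forall>i\<ge>m. f i = 0)"

definition vsupp :: "'a::ring_1 set \<Rightarrow> (nat \<Rightarrow> 'a) \<Rightarrow> nat \<Rightarrow> nat \<Rightarrow> (nat \<Rightarrow> 'a)
     \<Rightarrow> ((nat \<Rightarrow> nat) \<times> nat) set" where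
  "vsupp R x n m f = {(\<alpha>, i). i < m \<and> \<alpha> \<in> supp R x n (f i)}"

text \<open>Leading monomial of a vector; None stands for lm(0) = 0.\<close>
definition lmv :: "'a::ring_1 set \<Rightarrow> (nat \<Rightarrow> 'a) \<Rightarrow> nat \<Rightarrow> nat
     \<Rightarrow> ((nat \<Rightarrow> nat) \<times> nat \<Rightarrow> (nat \<Rightarrow> nat) \<times> nat \<Rightarrow> bool) \<Rightarrow> (nat \<Rightarrow> 'a)
     \<Rightarrow> ((nat \<Rightarrow> nat) \<times> nat) option" where
  "lmv R x n m leM f = (if vsupp R x n m f = {} then None
      else Some (THE X. X \<in> vsupp R x n m f \<and> (\<forall>Y\<in>vsupp R x n m f. leM Y X)))"

definition lcv :: "'a::ring_1 set \<Rightarrow> (nat \<Rightarrow> 'a) \<Rightarrow> nat \<Rightarrow> nat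
     \<Rightarrow> ((nat \<Rightarrow> nat) \<times> nat \<Rightarrow> (nat \<Rightarrow> nat) \<times> nat \<Rightarrow> bool) \<Rightarrow> (nat \<Rightarrow> 'a) \<Rightarrow> 'a" where
  "lcv R x n m leM f = (case lmv R x n m leM f of None \<Rightarrow> 0
      | Some (\<alpha>, i) \<Rightarrow> coeffs R x n (f i) \<alpha>)"

fun mgt :: "('m \<Rightarrow> 'm \<Rightarrow> bool) \<Rightarrow> 'm option \<Rightarrow> 'm option \<Rightarrow> bool" where
  "mgt leM (Some X) None = True"
| "mgt leM (Some X) (Some Y) = (leM Y X \<and> X \<noteq> Y)"
| "mgt leM None _ = False"

definition xv :: "(nat \<Rightarrow> 'a::ring_1) \<Rightarrow> nat \<Rightarrow> (nat \<Rightarrow> nat) \<Rightarrow> (nat \<Rightarrow> 'a) \<Rightarrow> (nat \<Rightarrow> 'a)" where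
  "xv x n \<theta> f = (\<lambda>i. xmon x n \<theta> * f i)"

definition red1 :: "'a::ring_1 set \<Rightarrow> (nat \<Rightarrow> 'a) \<Rightarrow> nat \<Rightarrow> nat
     \<Rightarrow> ((nat \<Rightarrow> nat) \<times> nat \<Rightarrow> (nat \<Rightarrow> nat) \<times> nat \<Rightarrow> bool) \<Rightarrow> (nat \<Rightarrow> 'a) set
     \<Rightarrow> (nat \<Rightarrow> 'a) \<Rightarrow> (nat \<Rightarrow> 'a) \<Rightarrow> bool" where
  "red1 R x n m leM F f h \<longleftrightarrow>
     (f = (\<lambda>_. 0) \<and> h = (\<lambda>_. 0))
   \<or> (f \<noteq> (\<lambda>_. 0) \<and> (\<exists>(t::nat) g r a.
        (\<forall>k<t. g k \<in> F \<and> r k \<in> R \<and> a k \<in> exps n \<and>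
           (case (lmv R x n m leM f, lmv R x n m leM (g k)) of
              (Some (\<beta>, i), Some (\<gamma>, j)) \<Rightarrow> j = i \<and> add_exp (a k) \<gamma> = \<beta>
            | _ \<Rightarrow> False))
      \<and> lcv R x n m leM f = (\<Sum>k<t. r k * sigma_pow R x n (a k) (lcv R x n m leM (g k))
                                      * cab R x n (a k) (fst (the (lmv R x n m leM (g k)))))
      \<and> h = (\<lambda>i. f i - (\<Sum>k<t. r k * xmon x n (a k) * g k i))))"

definition redp :: "'a::ring_1 set \<Rightarrow> (nat \<Rightarrow> 'a) \<Rightarrow> nat \<Rightarrow> nat
     \<Rightarrow> ((nat \<Rightarrow> nat) \<times> nat \<Rightarrow> (nat \<Rightarrow> nat) \<times> nat \<Rightarrow> bool) \<Rightarrow> (nat \<Rightarrow> 'a) set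
     \<Rightarrow> (nat \<Rightarrow> 'a) \<Rightarrow> (nat \<Rightarrow> 'a) \<Rightarrow> bool" where
  "redp R x n m leM F = tranclp (red1 R x n m leM F)"

end

theory Submission
  imports Defs
begin

text \<open>
  The argument rests on the degree filtration of A. From the relations
  x_i r = \<sigma>_i(r) x_i + \<delta>_i(r) and x_j x_i = c_{i,j} x_i x_j + (terms of degree \<le> 1), induction on
  the degree gives x^\<alpha> r \<equiv> \<sigma>^\<alpha>(r) x^\<alpha> and x^\<alpha> x^\<beta> \<equiv> c_{\<alpha>,\<beta>} x^(\<alpha>+\<beta>) modulo lower degree.

  Multiply a one-step reduction h = f - \<Sum>_k r_k x^\<alpha>_k f_k on the left by x^\<theta>. Each term
  x^\<theta> r_k x^\<alpha>_k f_k differs from the admissible reduction term \<sigma>^\<theta>(r_k) c_{\<theta>,\<alpha>_k} x^(\<theta>+\<alpha>_k) f_k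
  by a vector whose monomials lie strictly below lm(x^\<theta> f) = x^(\<theta>+\<beta>), where x^\<beta> = lm(f); the
  invertibility of c_{\<theta>,\<beta>} keeps the leading coefficient \<sigma>^\<theta>(lc f) c_{\<theta>,\<beta>} of x^\<theta> f nonzero.
  The sum p of these differences is the correction in (i); in the quasi-commutative case the
  congruences are equalities and p = 0. Adding a vector below the leading monomial does not
  disturb a reduction step, and leading monomials decrease along reductions; this gives (ii),
  and (iii), (iv) follow by induction along the chain, accumulating the corrections.
\<close>

section \<open>Exponents and ordered monomials\<close>

lemma zero_exps [simp]: "(\<lambda>_. 0) \<in> exps n"
  by (simp add: exps_def)

lemma exps_nonzero_less: "\<alpha> \<in> exps n \<Longrightarrow> \<alpha> j \<noteq> 0 \<Longrightarrow> j < n"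
  unfolding exps_def using not_less by blast

lemma exps_fun_upd: "\<alpha> \<in> exps n \<Longrightarrow> j < n \<Longrightarrow> \<alpha>(j := v) \<in> exps n"
  by (simp add: exps_def)

lemma add_exp_exps: "\<alpha> \<in> exps n \<Longrightarrow> \<beta> \<in> exps n \<Longrightarrow> add_exp \<alpha> \<beta> \<in> exps n"
  by (simp add: exps_def add_exp_def)

lemma add_exp_assoc: "add_exp (add_exp \<alpha> \<beta>) \<gamma> = add_exp \<alpha> (add_exp \<beta> \<gamma>)"
  by (simp add: add_exp_def add.assoc)

lemma add_exp_left_cancel: "add_exp \<alpha> \<beta> = add_exp \<alpha> \<gamma> \<longleftrightarrow> \<beta> = \<gamma>"
  by (auto simp: add_exp_def fun_eq_iff)

lemma add_exp_fun_upd_Suc: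
  "add_exp (\<alpha>(j := Suc (\<alpha> j))) \<beta> = (add_exp \<alpha> \<beta>)(j := Suc (add_exp \<alpha> \<beta> j))"
  by (auto simp: add_exp_def fun_eq_iff)

lemma deg_exp_add: "deg_exp n (add_exp \<alpha> \<beta>) = deg_exp n \<alpha> + deg_exp n \<beta>"
  by (simp add: deg_exp_def add_exp_def sum.distrib)

lemma deg_exp_zero [simp]: "deg_exp n (\<lambda>_. 0) = 0"
  by (simp add: deg_exp_def)

lemma deg_exp_eq_0: "\<alpha> \<in> exps n \<Longrightarrow> deg_exp n \<alpha> = 0 \<Longrightarrow> \<alpha> = (\<lambda>_. 0)"
  by (rule ext) (auto simp: deg_exp_def exps_def not_less[symmetric])

lemma deg_exp_fun_upd_Suc: "j < n \<Longrightarrow> deg_exp n (\<alpha>(j := Suc (\<alpha> j))) = Suc (deg_exp n \<alpha>)"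
proof -
  assume j: "j < n"
  have "deg_exp n \<beta> = \<beta> j + (\<Sum>i\<in>{..<n} - {j}. \<beta> i)" for \<beta>
    unfolding deg_exp_def using j by (subst sum.remove[of _ j]) auto
  from this[of "\<alpha>(j := Suc (\<alpha> j))"] this[of \<alpha>] show ?thesis by simp
qed

lemma exps_split_first_nonzero:
  assumes "\<alpha> \<in> exps n" and "\<alpha> k \<noteq> 0"
  obtains j \<alpha>' where "j \<le> k" "j < n" "\<alpha>' \<in> exps n" "\<forall>l<j. \<alpha>' l = 0"
    "\<alpha> = \<alpha>'(j := Suc (\<alpha>' j))"
proof -
  define j where "j = (LEAST k. \<alpha> k \<noteq> 0)"
  have \<alpha>j: "\<alpha> j \<noteq> 0" and jk: "j \<le> k"
    using LeastI[of "\<lambda>k. \<alpha> k \<noteq> 0", OF assms(2)] Least_le[of "\<lambda>k. \<alpha> k \<noteq> 0", OF assms(2)] j_def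
    by auto
  have j: "j < n" using exps_nonzero_less[OF assms(1) \<alpha>j] .
  show ?thesis
  proof (rule that[OF jk j])
    show "\<alpha>(j := \<alpha> j - 1) \<in> exps n" "\<forall>l<j. (\<alpha>(j := \<alpha> j - 1)) l = 0"
      using exps_fun_upd[OF assms(1) j] not_less_Least unfolding j_def by auto
    show "\<alpha> = (\<alpha>(j := \<alpha> j - 1))(j := Suc ((\<alpha>(j := \<alpha> j - 1)) j))" using \<alpha>j by auto
  qed
qed

text \<open>Raising the first nonzero entry is the one case where left multiplication by a variable
  acts exactly on the ordered product x^\<alpha> (see xmon_fun_upd_Suc below), hence this induction.\<close>

lemma exps_induct [consumes 1, case_names zero step]:
  assumes "\<alpha> \<in> exps n" and "P (\<lambda>_. 0)"
    and "\<And>\<alpha> j. \<alpha> \<in> exps n \<Longrightarrow> j < n \<Longrightarrow> \<forall>k<j. \<alpha> k = 0 \<Longrightarrow> P \<alpha> \<Longrightarrow> P (\<alpha>(j := Suc (\<alpha> j)))"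
  shows "P \<alpha>"
proof -
  have "\<alpha> \<in> exps n \<Longrightarrow> deg_exp n \<alpha> = d \<Longrightarrow> P \<alpha>" for \<alpha> d
  proof (induction d arbitrary: \<alpha>)
    case 0
    then show ?case using assms(2) deg_exp_eq_0 by auto
  next
    case (Suc d)
    then have "\<alpha> \<noteq> (\<lambda>_. 0)" by auto
    then obtain k where "\<alpha> k \<noteq> 0" by auto
    then obtain j \<alpha>' where j: "j < n" and \<alpha>': "\<alpha>' \<in> exps n" "\<forall>k<j. \<alpha>' k = 0"
      and \<alpha>: "\<alpha> = \<alpha>'(j := Suc (\<alpha>' j))"
      using exps_split_first_nonzero[OF Suc.prems(1)] by metis
    have "Suc (deg_exp n \<alpha>') = Suc d"
      using deg_exp_fun_upd_Suc[OF j, of \<alpha>'] \<alpha> Suc.prems(2) by metis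
    then have "deg_exp n \<alpha>' = d" by simp
    then show "P \<alpha>" using assms(3)[OF \<alpha>'(1) j \<alpha>'(2)] Suc.IH \<alpha>' \<alpha> by metis
  qed
  then show ?thesis using assms(1) by blast
qed

lemma unit_exp_eq: "unit_exp i = (\<lambda>_. 0)(i := Suc 0)"
  by (auto simp: unit_exp_def)

lemma unit_exp_exps: "i < n \<Longrightarrow> unit_exp i \<in> exps n"
  by (simp add: unit_exp_eq exps_fun_upd)

lemma unit_exp_nonzero: "unit_exp i \<noteq> (\<lambda>_. 0)"
  by (auto simp: unit_exp_def fun_eq_iff)

lemma upt_split_at: "j < n \<Longrightarrow> [0..<n] = [0..<j] @ j # [Suc j..<n]"
  using upt_add_eq_append[of 0 j "n - j"] upt_conv_Cons[of j n] by simp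

lemma xmon_foldr_zeros:
  fixes x :: "nat \<Rightarrow> 'a::monoid_mult"
  shows "\<forall>i\<in>set l. \<alpha> i = 0 \<Longrightarrow> foldr (\<lambda>i acc. x i ^ \<alpha> i * acc) l a = a"
  by (induction l) auto

lemma sigma_pow_foldr_zeros:
  "\<forall>i\<in>set l. \<alpha> i = 0 \<Longrightarrow> foldr (\<lambda>i g. (sigma R x n i ^^ \<alpha> i) \<circ> g) l h = h"
  by (induction l) auto

lemma xmon_zero [simp]: "xmon x n (\<lambda>_. 0) = 1"
  unfolding xmon_def by (rule xmon_foldr_zeros) simp

lemma sigma_pow_zero [simp]: "sigma_pow R x n (\<lambda>_. 0) = id"
  unfolding sigma_pow_def by (rule sigma_pow_foldr_zeros) simp

lemma xmon_fun_upd_Suc: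
  assumes "j < n" and "\<forall>k<j. \<alpha> k = 0"
  shows "xmon x n (\<alpha>(j := Suc (\<alpha> j))) = x j * xmon x n \<alpha>"
proof -
  have "foldr (\<lambda>i acc. x i ^ \<alpha> i * acc) [Suc j..<n] 1
      = foldr (\<lambda>i acc. x i ^ (\<alpha>(j := Suc (\<alpha> j))) i * acc) [Suc j..<n] 1"
    by (rule foldr_cong) auto
  then show ?thesis
    using assms(2) unfolding xmon_def upt_split_at[OF assms(1)]
    by (simp add: xmon_foldr_zeros mult.assoc)
qed

lemma sigma_pow_fun_upd_Suc:
  assumes "j < n" and "\<forall>k<j. \<alpha> k = 0"
  shows "sigma_pow R x n (\<alpha>(j := Suc (\<alpha> j))) = sigma R x n j \<circ> sigma_pow R x n \<alpha>"
proof -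
  have "foldr (\<lambda>i g. (sigma R x n i ^^ \<alpha> i) \<circ> g) [Suc j..<n] id
      = foldr (\<lambda>i g. (sigma R x n i ^^ (\<alpha>(j := Suc (\<alpha> j))) i) \<circ> g) [Suc j..<n] id"
    by (rule foldr_cong) auto
  then show ?thesis
    using assms(2) unfolding sigma_pow_def upt_split_at[OF assms(1)]
    by (simp add: sigma_pow_foldr_zeros o_assoc)
qed

lemma xmon_unit_exp: "i < n \<Longrightarrow> xmon x n (unit_exp i) = x i"
  using xmon_fun_upd_Suc[of i n "\<lambda>_. 0" x] by (simp add: unit_exp_eq)

lemma deg_unit_exp: "i < n \<Longrightarrow> deg_exp n (unit_exp i) = 1"
  using deg_exp_fun_upd_Suc[of i n "\<lambda>_. 0"] by (simp add: unit_exp_eq)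

section \<open>Coordinates and the degree filtration\<close>

locale sigma_pbw =
  fixes R :: "'a::ring_1 set" and x :: "nat \<Rightarrow> 'a" and n :: nat
  assumes pbw: "sigma_PBW R x n"
begin

abbreviation "cf \<equiv> coeffs R x n"
abbreviation "X \<equiv> xmon x n"
abbreviation "deg \<equiv> deg_exp n"
abbreviation "sig \<equiv> sigma R x n"
abbreviation "sigp \<equiv> sigma_pow R x n"

lemma R_subring: "subring R"
  using pbw by (simp add: sigma_PBW_def)

lemma zero_in_R [simp]: "0 \<in> R" and one_in_R [simp]: "1 \<in> R"
  using R_subring by (simp_all add: subring_def)

lemma R_add [intro]: "a \<in> R \<Longrightarrow> b \<in> R \<Longrightarrow> a + b \<in> R"
  and R_diff [intro]: "a \<in> R \<Longrightarrow> b \<in> R \<Longrightarrow> a - b \<in> R"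
  and R_mult [intro]: "a \<in> R \<Longrightarrow> b \<in> R \<Longrightarrow> a * b \<in> R"
  using R_subring by (simp_all add: subring_def)

lemma unique_rep: "\<exists>!c. is_rep R n c \<and> a = rep_sum x n c"
  using pbw by (simp add: sigma_PBW_def)

lemma var_mult_R_axiom:
  "i < n \<Longrightarrow> r \<in> R \<Longrightarrow> r \<noteq> 0 \<Longrightarrow> \<exists>c\<in>R. c \<noteq> 0 \<and> x i * r - c * x i \<in> R"
  using pbw by (simp add: sigma_PBW_def)

lemma var_mult_var_axiom:
  "i < n \<Longrightarrow> j < n \<Longrightarrow> \<exists>c\<in>R. c \<noteq> 0 \<and>
     x j * x i - c * x i * x j \<in> {r0 + (\<Sum>k<n. rk k * x k) | r0 rk. r0 \<in> R \<and> (\<forall>k<n. rk k \<in> R)}"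
  using pbw by (simp add: sigma_PBW_def)

lemma cf_rep: "is_rep R n (cf a) \<and> a = rep_sum x n (cf a)"
  unfolding coeffs_def using theI'[OF unique_rep] .

lemma cf_unique: "is_rep R n c \<Longrightarrow> a = rep_sum x n c \<Longrightarrow> cf a = c"
  unfolding coeffs_def by (intro the1_equality[OF unique_rep]) simp

lemma cf_in_R [simp, intro]: "cf a \<alpha> \<in> R"
  using cf_rep[of a] unfolding is_rep_def by (cases "cf a \<alpha> = 0") auto

lemma cf_nonzero_exps: "cf a \<alpha> \<noteq> 0 \<Longrightarrow> \<alpha> \<in> exps n"
  using cf_rep[of a] unfolding is_rep_def by auto

lemma cf_outside_exps: "\<alpha> \<notin> exps n \<Longrightarrow> cf a \<alpha> = 0"
  using cf_nonzero_exps by blast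

lemma finite_cf_support [simp]: "finite {\<alpha>. cf a \<alpha> \<noteq> 0}"
  using cf_rep[of a] unfolding is_rep_def by auto

lemma cf_expansion: "a = (\<Sum>\<alpha>\<in>{\<alpha>. cf a \<alpha> \<noteq> 0}. cf a \<alpha> * X \<alpha>)"
  using cf_rep[of a] unfolding rep_sum_def by simp

lemma rep_sum_superset:
  "finite S \<Longrightarrow> {\<alpha>. c \<alpha> \<noteq> 0} \<subseteq> S \<Longrightarrow> rep_sum x n c = (\<Sum>\<alpha>\<in>S. c \<alpha> * X \<alpha>)"
  unfolding rep_sum_def by (rule sum.mono_neutral_left) auto

lemma cf_add: "cf (a + b) = (\<lambda>\<alpha>. cf a \<alpha> + cf b \<alpha>)"
proof (rule cf_unique)
  let ?S = "{\<alpha>. cf a \<alpha> \<noteq> 0} \<union> {\<alpha>. cf b \<alpha> \<noteq> 0}"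
  show "is_rep R n (\<lambda>\<alpha>. cf a \<alpha> + cf b \<alpha>)"
    unfolding is_rep_def
    by (auto intro: finite_subset[of _ ?S]) (rule ccontr, simp add: cf_outside_exps)
  have "rep_sum x n (\<lambda>\<alpha>. cf a \<alpha> + cf b \<alpha>) = (\<Sum>\<alpha>\<in>?S. (cf a \<alpha> + cf b \<alpha>) * X \<alpha>)"
    by (rule rep_sum_superset) auto
  also have "\<dots> = (\<Sum>\<alpha>\<in>?S. cf a \<alpha> * X \<alpha>) + (\<Sum>\<alpha>\<in>?S. cf b \<alpha> * X \<alpha>)"
    by (simp add: distrib_right sum.distrib)
  also have "\<dots> = a + b"
    using cf_rep[of a] cf_rep[of b] rep_sum_superset[of ?S "cf a"] rep_sum_superset[of ?S "cf b"]
    by auto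
  finally show "a + b = rep_sum x n (\<lambda>\<alpha>. cf a \<alpha> + cf b \<alpha>)" by simp
qed

lemma cf_smult: "r \<in> R \<Longrightarrow> cf (r * a) = (\<lambda>\<alpha>. r * cf a \<alpha>)"
proof (rule cf_unique)
  assume r: "r \<in> R"
  show "is_rep R n (\<lambda>\<alpha>. r * cf a \<alpha>)"
    unfolding is_rep_def using r
    by (auto intro: finite_subset[OF _ finite_cf_support[of a]]) (rule ccontr, simp add: cf_outside_exps)
  have "rep_sum x n (\<lambda>\<alpha>. r * cf a \<alpha>) = (\<Sum>\<alpha>\<in>{\<alpha>. cf a \<alpha> \<noteq> 0}. (r * cf a \<alpha>) * X \<alpha>)"
    by (rule rep_sum_superset) auto
  also have "\<dots> = r * a"
    by (subst (2) cf_expansion) (simp add: sum_distrib_left mult.assoc)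
  finally show "r * a = rep_sum x n (\<lambda>\<alpha>. r * cf a \<alpha>)" by simp
qed

lemma cf_0 [simp]: "cf 0 = (\<lambda>_. 0)"
  by (rule cf_unique) (auto simp: is_rep_def rep_sum_def)

lemma cf_uminus: "cf (- a) = (\<lambda>\<alpha>. - cf a \<alpha>)"
  using cf_smult[of "-1" a] R_diff[of 0 1] by simp

lemma cf_diff: "cf (a - b) = (\<lambda>\<alpha>. cf a \<alpha> - cf b \<alpha>)"
  using cf_add[of a "- b"] by (simp add: cf_uminus)

lemma cf_sum: "cf (\<Sum>i\<in>I. f i) = (\<lambda>\<alpha>. \<Sum>i\<in>I. cf (f i) \<alpha>)"
  by (induction I rule: infinite_finite_induct) (auto simp: cf_add)

lemma cf_monom:
  "c \<in> R \<Longrightarrow> \<alpha> \<in> exps n \<Longrightarrow> cf (c * X \<alpha>) = (\<lambda>\<beta>. if \<beta> = \<alpha> then c else 0)"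
proof (rule cf_unique)
  assume "c \<in> R" "\<alpha> \<in> exps n"
  then show "is_rep R n (\<lambda>\<beta>. if \<beta> = \<alpha> then c else 0)"
    unfolding is_rep_def by (auto intro: finite_subset[of _ "{\<alpha>}"])
  have "rep_sum x n (\<lambda>\<beta>. if \<beta> = \<alpha> then c else 0) = (\<Sum>\<beta>\<in>{\<alpha>}. (if \<beta> = \<alpha> then c else 0) * X \<beta>)"
    by (rule rep_sum_superset) auto
  then show "c * X \<alpha> = rep_sum x n (\<lambda>\<beta>. if \<beta> = \<alpha> then c else 0)" by simp
qed

lemma cf_eq_0D: "cf a = (\<lambda>_. 0) \<Longrightarrow> a = 0"
  by (subst cf_expansion) simp

definition deg_le :: "nat \<Rightarrow> 'a set" where
  "deg_le d = {a. \<forall>\<alpha>. cf a \<alpha> \<noteq> 0 \<longrightarrow> deg \<alpha> \<le> d}"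

definition deg_lt :: "nat \<Rightarrow> 'a set" where
  "deg_lt d = {a. \<forall>\<alpha>. cf a \<alpha> \<noteq> 0 \<longrightarrow> deg \<alpha> < d}"

lemma deg_le_zero [simp]: "0 \<in> deg_le d" and deg_lt_zero [simp]: "0 \<in> deg_lt d"
  by (simp_all add: deg_le_def deg_lt_def)

lemma deg_le_add [intro]: "a \<in> deg_le d \<Longrightarrow> b \<in> deg_le d \<Longrightarrow> a + b \<in> deg_le d"
  by (auto simp: deg_le_def cf_add) (metis add_0)

lemma deg_lt_add [intro]: "a \<in> deg_lt d \<Longrightarrow> b \<in> deg_lt d \<Longrightarrow> a + b \<in> deg_lt d"
  by (auto simp: deg_lt_def cf_add) (metis add_0)

lemma deg_lt_diff [intro]: "a \<in> deg_lt d \<Longrightarrow> b \<in> deg_lt d \<Longrightarrow> a - b \<in> deg_lt d"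
  by (auto simp: deg_lt_def cf_diff) (metis diff_self diff_0_right)

lemma deg_le_smult [intro]: "r \<in> R \<Longrightarrow> a \<in> deg_le d \<Longrightarrow> r * a \<in> deg_le d"
  by (auto simp: deg_le_def cf_smult) (metis mult_zero_right)

lemma deg_lt_smult [intro]: "r \<in> R \<Longrightarrow> a \<in> deg_lt d \<Longrightarrow> r * a \<in> deg_lt d"
  by (auto simp: deg_lt_def cf_smult) (metis mult_zero_right)

lemma deg_le_sum [intro]: "(\<And>i. i \<in> I \<Longrightarrow> f i \<in> deg_le d) \<Longrightarrow> sum f I \<in> deg_le d"
  by (induction I rule: infinite_finite_induct) auto

lemma deg_lt_sum [intro]: "(\<And>i. i \<in> I \<Longrightarrow> f i \<in> deg_lt d) \<Longrightarrow> sum f I \<in> deg_lt d"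
  by (induction I rule: infinite_finite_induct) auto

lemma deg_le_mono: "a \<in> deg_le d \<Longrightarrow> d \<le> e \<Longrightarrow> a \<in> deg_le e"
  by (auto simp: deg_le_def)

lemma deg_lt_mono: "a \<in> deg_lt d \<Longrightarrow> d \<le> e \<Longrightarrow> a \<in> deg_lt e"
  by (fastforce simp: deg_lt_def)

lemma deg_lt_Suc: "deg_lt (Suc d) = deg_le d"
  by (auto simp: deg_le_def deg_lt_def less_Suc_eq_le)

lemma deg_lt_0: "a \<in> deg_lt 0 \<Longrightarrow> a = 0"
  by (rule cf_eq_0D) (auto simp: deg_lt_def)

lemma deg_le_cf: "a \<in> deg_le d \<Longrightarrow> cf a \<alpha> \<noteq> 0 \<Longrightarrow> deg \<alpha> \<le> d"
  by (auto simp: deg_le_def)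

lemma deg_lt_cf: "a \<in> deg_lt d \<Longrightarrow> d \<le> deg \<alpha> \<Longrightarrow> cf a \<alpha> = 0"
  by (fastforce simp: deg_lt_def)

lemma monom_deg_le: "c \<in> R \<Longrightarrow> \<alpha> \<in> exps n \<Longrightarrow> deg \<alpha> \<le> d \<Longrightarrow> c * X \<alpha> \<in> deg_le d"
  by (auto simp: deg_le_def cf_monom)

lemma xmon_deg_le: "\<alpha> \<in> exps n \<Longrightarrow> X \<alpha> \<in> deg_le (deg \<alpha>)"
  using monom_deg_le[of 1 \<alpha> "deg \<alpha>"] by simp

lemma var_deg_le: "j < n \<Longrightarrow> x j \<in> deg_le 1"
  using xmon_deg_le[OF unit_exp_exps] xmon_unit_exp deg_unit_exp by metis

lemma sigma_props:
  assumes "i < n" and "s \<in> R"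
  shows "sig i s \<in> R" and "x i * s - sig i s * x i \<in> R" and "s \<noteq> 0 \<Longrightarrow> sig i s \<noteq> 0"
proof -
  have "sig i s \<in> R \<and> x i * s - sig i s * x i \<in> R \<and> (s \<noteq> 0 \<longrightarrow> sig i s \<noteq> 0)"
  proof (cases "s = 0")
    case True
    then show ?thesis by (simp add: sigma_def)
  next
    case False
    then obtain c where c: "c \<in> R" "c \<noteq> 0" "x i * s - c * x i \<in> R"
      using var_mult_R_axiom assms by blast
    define r0 where "r0 = x i * s - c * x i"
    have eq: "x i * s = c * X (unit_exp i) + r0 * X (\<lambda>_. 0)"
      using xmon_unit_exp[OF assms(1), of x] r0_def by simp
    have "sig i s = c"
      unfolding sigma_def eq cf_add using c r0_def cf_monom[OF c(1) unit_exp_exps[OF assms(1)]]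
        cf_monom[of r0 "\<lambda>_. 0"] unit_exp_nonzero[of i] by simp
    then show ?thesis using c by simp
  qed
  then show "sig i s \<in> R" and "x i * s - sig i s * x i \<in> R" and "s \<noteq> 0 \<Longrightarrow> sig i s \<noteq> 0"
    by auto
qed

lemmas sigma_in_R = sigma_props(1) and delta_in_R = sigma_props(2)
  and sigma_nonzero = sigma_props(3)

lemma var_mult_eq_sigma: "i < n \<Longrightarrow> s \<in> R \<Longrightarrow> \<exists>r\<in>R. x i * s = sig i s * x i + r"
proof
  assume "i < n" "s \<in> R"
  then show "x i * s - sig i s * x i \<in> R" by (rule delta_in_R)
qed simp

section \<open>Commutation rules modulo lower degree\<close>

lemma var_mult_deg_le_if_xmon:
  assumes xmon: "\<And>i \<beta>. i < n \<Longrightarrow> \<beta> \<in> exps n \<Longrightarrow> deg \<beta> \<le> d \<Longrightarrow>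
      \<exists>c\<in>R. x i * X \<beta> - c * X (\<beta>(i := Suc (\<beta> i))) \<in> deg_le (deg \<beta>)"
    and j: "j < n" and a: "a \<in> deg_le d"
  shows "x j * a \<in> deg_le (Suc d)"
proof -
  let ?S = "{\<gamma>. cf a \<gamma> \<noteq> 0}"
  have "x j * (cf a \<gamma> * X \<gamma>) \<in> deg_le (Suc d)" if \<gamma>: "\<gamma> \<in> ?S" for \<gamma>
  proof -
    have \<gamma>_exps: "\<gamma> \<in> exps n" and \<gamma>_deg: "deg \<gamma> \<le> d"
      using \<gamma> cf_nonzero_exps deg_le_cf[OF a] by auto
    obtain r where r: "r \<in> R" "x j * cf a \<gamma> = sig j (cf a \<gamma>) * x j + r"
      using var_mult_eq_sigma[OF j cf_in_R] by blast
    obtain c where c: "c \<in> R" "x j * X \<gamma> - c * X (\<gamma>(j := Suc (\<gamma> j))) \<in> deg_le (deg \<gamma>)"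
      using xmon[OF j \<gamma>_exps \<gamma>_deg] by blast
    have "c * X (\<gamma>(j := Suc (\<gamma> j))) \<in> deg_le (Suc d)"
      using monom_deg_le[OF c(1) exps_fun_upd[OF \<gamma>_exps j]] deg_exp_fun_upd_Suc[OF j] \<gamma>_deg
      by simp
    moreover have "x j * X \<gamma> - c * X (\<gamma>(j := Suc (\<gamma> j))) \<in> deg_le (Suc d)"
      using deg_le_mono[OF c(2)] \<gamma>_deg by simp
    ultimately have "x j * X \<gamma> \<in> deg_le (Suc d)" using deg_le_add by fastforce
    then have "sig j (cf a \<gamma>) * (x j * X \<gamma>) \<in> deg_le (Suc d)"
      using sigma_in_R[OF j cf_in_R] by blast
    moreover have "r * X \<gamma> \<in> deg_le (Suc d)" using monom_deg_le[OF r(1) \<gamma>_exps] \<gamma>_deg by simp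
    moreover have "x j * (cf a \<gamma> * X \<gamma>) = sig j (cf a \<gamma>) * (x j * X \<gamma>) + r * X \<gamma>"
      by (simp add: mult.assoc[symmetric] r(2) distrib_right)
    ultimately show ?thesis by (simp add: deg_le_add)
  qed
  moreover have "x j * a = (\<Sum>\<gamma>\<in>?S. x j * (cf a \<gamma> * X \<gamma>))"
    by (subst cf_expansion) (simp add: sum_distrib_left)
  ultimately show ?thesis by (metis (mono_tags) deg_le_sum mem_Collect_eq)
qed

text \<open>Moving x_i past a leading factor x_j with j < i uses the relation for x_i x_j, whose
  error terms have lower degree; this is the induction step for the degree estimate.\<close>

lemma var_mult_xmon_past_var:
  assumes xmon: "\<And>k \<gamma>. k < n \<Longrightarrow> \<gamma> \<in> exps n \<Longrightarrow> deg \<gamma> \<le> deg \<beta> \<Longrightarrow>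
      \<exists>c\<in>R. x k * X \<gamma> - c * X (\<gamma>(k := Suc (\<gamma> k))) \<in> deg_le (deg \<gamma>)"
    and ji: "j < i" and i: "i < n" and \<beta>: "\<beta> \<in> exps n" and zeros: "\<forall>k<j. \<beta> k = 0"
  shows "\<exists>c\<in>R. x i * X (\<beta>(j := Suc (\<beta> j)))
                 - c * X (\<beta>(j := Suc (\<beta> j), i := Suc (\<beta> i))) \<in> deg_le (Suc (deg \<beta>))"
proof -
  have j: "j < n" using ji i by simp
  obtain c r0 rk where c: "c \<in> R" and r: "r0 \<in> R" "\<forall>k<n. rk k \<in> R"
    and comm: "x i * x j = c * x j * x i + r0 + (\<Sum>k<n. rk k * x k)"
    using var_mult_var_axiom[OF j i] by (auto simp: algebra_simps)
  define \<gamma> where "\<gamma> = \<beta>(i := Suc (\<beta> i))"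
  obtain s where s: "s \<in> R" "x i * X \<beta> - s * X \<gamma> \<in> deg_le (deg \<beta>)"
    using xmon[OF i \<beta>] unfolding \<gamma>_def by blast
  define v where "v = x i * X \<beta> - s * X \<gamma>"
  obtain r1 where r1: "r1 \<in> R" "x j * s = sig j s * x j + r1"
    using var_mult_eq_sigma[OF j s(1)] by blast
  have \<gamma>_exps: "\<gamma> \<in> exps n" and \<gamma>_deg: "deg \<gamma> = Suc (deg \<beta>)"
    using exps_fun_upd[OF \<beta> i] deg_exp_fun_upd_Suc[OF i] by (simp_all add: \<gamma>_def)
  have X\<beta>: "X (\<beta>(j := Suc (\<beta> j))) = x j * X \<beta>" by (rule xmon_fun_upd_Suc[OF j zeros])
  have X\<gamma>: "x j * X \<gamma> = X (\<beta>(j := Suc (\<beta> j), i := Suc (\<beta> i)))"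
    using xmon_fun_upd_Suc[OF j, of \<gamma> x] zeros ji unfolding \<gamma>_def
    by (simp add: fun_upd_twist)
  define T where "T = X (\<beta>(j := Suc (\<beta> j), i := Suc (\<beta> i)))"
  have main: "x i * X (\<beta>(j := Suc (\<beta> j))) - (c * sig j s) * T =
      c * (r1 * X \<gamma> + x j * v) + r0 * X \<beta> + (\<Sum>k<n. rk k * (x k * X \<beta>))"
  proof -
    have "x i * X (\<beta>(j := Suc (\<beta> j))) = (c * x j * x i + r0 + (\<Sum>k<n. rk k * x k)) * X \<beta>"
      by (simp add: X\<beta> mult.assoc[symmetric] comm)
    also have "\<dots> = c * (x j * (x i * X \<beta>)) + r0 * X \<beta> + (\<Sum>k<n. rk k * (x k * X \<beta>))"
      by (simp add: distrib_right sum_distrib_right mult.assoc)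
    also have "x i * X \<beta> = s * X \<gamma> + v" by (simp add: v_def)
    also have "x j * (s * X \<gamma> + v) = sig j s * T + r1 * X \<gamma> + x j * v"
      by (simp add: distrib_left mult.assoc[symmetric] r1(2) distrib_right T_def)
        (simp add: mult.assoc X\<gamma>)
    finally show ?thesis by (simp add: algebra_simps del: fun_upd_apply)
  qed
  have "x j * v \<in> deg_le (Suc (deg \<beta>))"
    using var_mult_deg_le_if_xmon[OF xmon j] s(2) v_def by blast
  moreover have "r1 * X \<gamma> \<in> deg_le (Suc (deg \<beta>))"
    using monom_deg_le[OF r1(1) \<gamma>_exps] \<gamma>_deg by simp
  moreover have "r0 * X \<beta> \<in> deg_le (Suc (deg \<beta>))"
    using monom_deg_le[OF r(1) \<beta>] by simp
  moreover have "rk k * (x k * X \<beta>) \<in> deg_le (Suc (deg \<beta>))" if k: "k < n" for k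
    using var_mult_deg_le_if_xmon[OF xmon k xmon_deg_le[OF \<beta>]] r(2) k by blast
  ultimately have "x i * X (\<beta>(j := Suc (\<beta> j))) - (c * sig j s) * T \<in> deg_le (Suc (deg \<beta>))"
    unfolding main using c by blast
  moreover have "c * sig j s \<in> R" using c sigma_in_R[OF j s(1)] by blast
  ultimately show ?thesis unfolding T_def by blast
qed

lemma var_mult_xmon:
  "i < n \<Longrightarrow> \<beta> \<in> exps n \<Longrightarrow> \<exists>c\<in>R. x i * X \<beta> - c * X (\<beta>(i := Suc (\<beta> i))) \<in> deg_le (deg \<beta>)"
proof (induction "deg \<beta>" arbitrary: i \<beta> rule: less_induct)
  case less
  show ?case
  proof (cases "\<forall>k<i. \<beta> k = 0")
    case True
    then show ?thesis using xmon_fun_upd_Suc[OF less.prems(1) True, where x = x] by (intro bexI[of _ 1]) auto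
  next
    case False
    then obtain k where k: "k < i" "\<beta> k \<noteq> 0" by blast
    then obtain j \<beta>' where "j \<le> k" and j: "j < n" and \<beta>': "\<beta>' \<in> exps n" "\<forall>k<j. \<beta>' k = 0"
      and \<beta>: "\<beta> = \<beta>'(j := Suc (\<beta>' j))"
      using exps_split_first_nonzero[OF less.prems(2)] by metis
    then have ji: "j < i" using k by simp
    have deg\<beta>: "deg \<beta> = Suc (deg \<beta>')" using deg_exp_fun_upd_Suc[OF j, of \<beta>'] \<beta> by simp
    have "\<exists>c\<in>R. x i * X (\<beta>'(j := Suc (\<beta>' j)))
              - c * X (\<beta>'(j := Suc (\<beta>' j), i := Suc (\<beta>' i))) \<in> deg_le (Suc (deg \<beta>'))"
      by (rule var_mult_xmon_past_var[OF _ ji less.prems(1) \<beta>']) (use less.hyps deg\<beta> in auto)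
    then show ?thesis using \<beta> ji deg\<beta> by simp
  qed
qed

lemma var_mult_deg_le: "j < n \<Longrightarrow> a \<in> deg_le d \<Longrightarrow> x j * a \<in> deg_le (Suc d)"
  using var_mult_deg_le_if_xmon[OF var_mult_xmon] by blast

lemma xmon_mult_deg_le: "\<alpha> \<in> exps n \<Longrightarrow> b \<in> deg_le e \<Longrightarrow> X \<alpha> * b \<in> deg_le (deg \<alpha> + e)"
proof (induction \<alpha> rule: exps_induct)
  case zero
  then show ?case by simp
next
  case (step \<alpha> j)
  then have "x j * (X \<alpha> * b) \<in> deg_le (Suc (deg \<alpha> + e))"
    using var_mult_deg_le by blast
  then show ?case
    using xmon_fun_upd_Suc[OF step(2,3), where x = x] deg_exp_fun_upd_Suc[OF step(2), of \<alpha>]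
    by (simp add: mult.assoc del: fun_upd_apply)
qed

lemma mult_deg_le: "a \<in> deg_le d \<Longrightarrow> b \<in> deg_le e \<Longrightarrow> a * b \<in> deg_le (d + e)"
proof -
  assume a: "a \<in> deg_le d" and b: "b \<in> deg_le e"
  have "cf a \<gamma> * (X \<gamma> * b) \<in> deg_le (d + e)" if \<gamma>: "cf a \<gamma> \<noteq> 0" for \<gamma>
    using xmon_mult_deg_le[OF cf_nonzero_exps[OF \<gamma>] b] deg_le_cf[OF a \<gamma>]
    by (intro deg_le_smult[OF cf_in_R]) (auto elim: deg_le_mono)
  moreover have "a * b = (\<Sum>\<gamma>\<in>{\<gamma>. cf a \<gamma> \<noteq> 0}. cf a \<gamma> * (X \<gamma> * b))"
    by (subst cf_expansion) (simp add: sum_distrib_right mult.assoc)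
  ultimately show ?thesis by (metis (mono_tags) deg_le_sum mem_Collect_eq)
qed

lemma mult_deg_lt_left: "a \<in> deg_lt d \<Longrightarrow> b \<in> deg_le e \<Longrightarrow> a * b \<in> deg_lt (d + e)"
  by (cases d) (auto dest: deg_lt_0 simp: deg_lt_Suc mult_deg_le)

lemma mult_deg_lt_right: "a \<in> deg_le d \<Longrightarrow> b \<in> deg_lt e \<Longrightarrow> a * b \<in> deg_lt (d + e)"
  by (cases e) (auto dest: deg_lt_0 simp: deg_lt_Suc mult_deg_le[of a d b, simplified])

lemma sigma_pow_props:
  assumes "\<alpha> \<in> exps n" and "r \<in> R"
  shows "sigp \<alpha> r \<in> R \<and> (r \<noteq> 0 \<longrightarrow> sigp \<alpha> r \<noteq> 0) \<and> X \<alpha> * r - sigp \<alpha> r * X \<alpha> \<in> deg_lt (deg \<alpha>)"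
  using assms(1)
proof (induction \<alpha> rule: exps_induct)
  case zero
  then show ?case using assms(2) by simp
next
  case (step \<alpha> j)
  let ?s = "sigp \<alpha> r"
  have s: "?s \<in> R" "r \<noteq> 0 \<longrightarrow> ?s \<noteq> 0" "X \<alpha> * r - ?s * X \<alpha> \<in> deg_lt (deg \<alpha>)"
    using step.IH by auto
  obtain r1 where r1: "r1 \<in> R" "x j * ?s = sig j ?s * x j + r1"
    using var_mult_eq_sigma[OF step(2) s(1)] by blast
  define w where "w = X \<alpha> * r - ?s * X \<alpha>"
  have X: "X (\<alpha>(j := Suc (\<alpha> j))) = x j * X \<alpha>" by (rule xmon_fun_upd_Suc[OF step(2,3)])
  have "X (\<alpha>(j := Suc (\<alpha> j))) * r = x j * (?s * X \<alpha> + w)"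
    by (simp add: X w_def mult.assoc)
  also have "\<dots> = sig j ?s * X (\<alpha>(j := Suc (\<alpha> j))) + (r1 * X \<alpha> + x j * w)"
    by (simp add: X distrib_left mult.assoc[symmetric] r1(2) distrib_right add.assoc)
  finally have eq: "X (\<alpha>(j := Suc (\<alpha> j))) * r - sig j ?s * X (\<alpha>(j := Suc (\<alpha> j)))
      = r1 * X \<alpha> + x j * w" by simp
  have "r1 * X \<alpha> \<in> deg_lt (Suc (deg \<alpha>))"
    using monom_deg_le[OF r1(1) step(1)] by (simp add: deg_lt_Suc)
  moreover have "x j * w \<in> deg_lt (Suc (deg \<alpha>))"
    using mult_deg_lt_right[OF var_deg_le[OF step(2)], of w "deg \<alpha>"] s(3) w_def by simp
  ultimately show ?case
    using sigma_in_R[OF step(2) s(1)] sigma_nonzero[OF step(2) s(1)] s(2) eq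
    by (simp add: sigma_pow_fun_upd_Suc[OF step(2,3)] deg_exp_fun_upd_Suc[OF step(2)] deg_lt_add
        del: fun_upd_apply)
qed

lemma sigma_pow_in_R: "\<alpha> \<in> exps n \<Longrightarrow> r \<in> R \<Longrightarrow> sigp \<alpha> r \<in> R"
  and sigma_pow_nonzero: "\<alpha> \<in> exps n \<Longrightarrow> r \<in> R \<Longrightarrow> r \<noteq> 0 \<Longrightarrow> sigp \<alpha> r \<noteq> 0"
  and xmon_mult_commute: "\<alpha> \<in> exps n \<Longrightarrow> r \<in> R \<Longrightarrow> X \<alpha> * r - sigp \<alpha> r * X \<alpha> \<in> deg_lt (deg \<alpha>)"
  using sigma_pow_props by blast+

lemma sigma_pow_0: "\<alpha> \<in> exps n \<Longrightarrow> sigp \<alpha> 0 = 0"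
proof -
  assume \<alpha>: "\<alpha> \<in> exps n"
  have "cf (0 - sigp \<alpha> 0 * X \<alpha>) \<alpha> = 0"
    using deg_lt_cf[OF xmon_mult_commute[OF \<alpha> zero_in_R] order_refl] by simp
  then show ?thesis using cf_monom[OF sigma_pow_in_R[OF \<alpha> zero_in_R] \<alpha>] by (simp add: cf_uminus)
qed

lemma xmon_mult_xmon_ex:
  assumes "\<alpha> \<in> exps n" and \<beta>: "\<beta> \<in> exps n"
  shows "\<exists>s\<in>R. X \<alpha> * X \<beta> - s * X (add_exp \<alpha> \<beta>) \<in> deg_lt (deg \<alpha> + deg \<beta>)"
  using assms(1)
proof (induction \<alpha> rule: exps_induct)
  case zero
  then show ?case by (intro bexI[of _ 1]) (auto simp: add_exp_def)
next
  case (step \<alpha> j)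
  obtain s where s: "s \<in> R" "X \<alpha> * X \<beta> - s * X (add_exp \<alpha> \<beta>) \<in> deg_lt (deg \<alpha> + deg \<beta>)"
    using step.IH by blast
  define \<mu> where "\<mu> = add_exp \<alpha> \<beta>"
  have \<mu>: "\<mu> \<in> exps n" "deg \<mu> = deg \<alpha> + deg \<beta>"
    using add_exp_exps[OF step(1) \<beta>] deg_exp_add by (simp_all add: \<mu>_def)
  obtain c where c: "c \<in> R" "x j * X \<mu> - c * X (\<mu>(j := Suc (\<mu> j))) \<in> deg_le (deg \<mu>)"
    using var_mult_xmon[OF step(2) \<mu>(1)] by blast
  obtain r1 where r1: "r1 \<in> R" "x j * s = sig j s * x j + r1"
    using var_mult_eq_sigma[OF step(2) s(1)] by blast
  define w where "w = X \<alpha> * X \<beta> - s * X \<mu>"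
  define v where "v = x j * X \<mu> - c * X (\<mu>(j := Suc (\<mu> j)))"
  have X: "X (\<alpha>(j := Suc (\<alpha> j))) = x j * X \<alpha>" by (rule xmon_fun_upd_Suc[OF step(2,3)])
  have "X (\<alpha>(j := Suc (\<alpha> j))) * X \<beta> = x j * (s * X \<mu> + w)"
    by (simp add: X w_def mult.assoc)
  also have "\<dots> = sig j s * (x j * X \<mu>) + r1 * X \<mu> + x j * w"
    by (simp add: distrib_left mult.assoc[symmetric] r1(2) distrib_right)
  also have "x j * X \<mu> = c * X (\<mu>(j := Suc (\<mu> j))) + v" by (simp add: v_def)
  finally have eq: "X (\<alpha>(j := Suc (\<alpha> j))) * X \<beta> - (sig j s * c) * X (\<mu>(j := Suc (\<mu> j)))
      = sig j s * v + r1 * X \<mu> + x j * w"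
    by (simp add: algebra_simps del: fun_upd_apply)
  have "sig j s * v \<in> deg_lt (Suc (deg \<alpha> + deg \<beta>))"
    using c(2) \<mu>(2) v_def sigma_in_R[OF step(2) s(1)] by (simp add: deg_lt_Suc deg_le_smult)
  moreover have "r1 * X \<mu> \<in> deg_lt (Suc (deg \<alpha> + deg \<beta>))"
    using monom_deg_le[OF r1(1) \<mu>(1)] \<mu>(2) by (simp add: deg_lt_Suc)
  moreover have "x j * w \<in> deg_lt (Suc (deg \<alpha> + deg \<beta>))"
    using mult_deg_lt_right[OF var_deg_le[OF step(2)], of w "deg \<alpha> + deg \<beta>"] s(2) w_def \<mu>_def
    by simp
  moreover have "sig j s * c \<in> R" using sigma_in_R[OF step(2) s(1)] c(1) by blast
  ultimately show ?case
    using eq unfolding \<mu>_def add_exp_fun_upd_Suc deg_exp_fun_upd_Suc[OF step(2)]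
    by (metis add_Suc deg_lt_add)
qed

lemma xmon_mult_xmon:
  assumes "\<alpha> \<in> exps n" and "\<beta> \<in> exps n"
  shows "X \<alpha> * X \<beta> - cab R x n \<alpha> \<beta> * X (add_exp \<alpha> \<beta>) \<in> deg_lt (deg \<alpha> + deg \<beta>)"
proof -
  obtain s where s: "s \<in> R" "X \<alpha> * X \<beta> - s * X (add_exp \<alpha> \<beta>) \<in> deg_lt (deg \<alpha> + deg \<beta>)"
    using xmon_mult_xmon_ex[OF assms] by blast
  define w where "w = X \<alpha> * X \<beta> - s * X (add_exp \<alpha> \<beta>)"
  have "cf w (add_exp \<alpha> \<beta>) = 0" using deg_lt_cf[OF s(2)] w_def deg_exp_add by simp
  moreover have "X \<alpha> * X \<beta> = s * X (add_exp \<alpha> \<beta>) + w" by (simp add: w_def)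
  ultimately have "cab R x n \<alpha> \<beta> = s"
    unfolding cab_def using cf_monom[OF s(1) add_exp_exps[OF assms]] by (simp add: cf_add)
  then show ?thesis using s by simp
qed

definition approx_mult :: "'a \<Rightarrow> (nat \<Rightarrow> nat) \<Rightarrow> 'a \<Rightarrow> 'a" where
  "approx_mult s \<alpha> b = (\<Sum>\<delta>\<in>{\<delta>. cf b \<delta> \<noteq> 0}.
      (s * sigp \<alpha> (cf b \<delta>) * cab R x n \<alpha> \<delta>) * X (add_exp \<alpha> \<delta>))"

lemma approx_mult_monom:
  assumes \<alpha>: "\<alpha> \<in> exps n" and \<delta>: "\<delta> \<in> exps n" and s: "s \<in> R" and c: "c \<in> R"
  shows "s * X \<alpha> * (c * X \<delta>) - (s * sigp \<alpha> c * cab R x n \<alpha> \<delta>) * X (add_exp \<alpha> \<delta>)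
           \<in> deg_lt (deg \<alpha> + deg \<delta>)"
proof -
  define w1 where "w1 = X \<alpha> * c - sigp \<alpha> c * X \<alpha>"
  define w2 where "w2 = X \<alpha> * X \<delta> - cab R x n \<alpha> \<delta> * X (add_exp \<alpha> \<delta>)"
  have "s * X \<alpha> * (c * X \<delta>) - (s * sigp \<alpha> c * cab R x n \<alpha> \<delta>) * X (add_exp \<alpha> \<delta>)
      = s * sigp \<alpha> c * w2 + s * (w1 * X \<delta>)"
    unfolding w1_def w2_def by (simp add: algebra_simps)
  moreover have "s * sigp \<alpha> c * w2 \<in> deg_lt (deg \<alpha> + deg \<delta>)"
    using deg_lt_smult[OF _ xmon_mult_xmon[OF \<alpha> \<delta>]] s sigma_pow_in_R[OF \<alpha> c] w2_def by blast
  moreover have "s * (w1 * X \<delta>) \<in> deg_lt (deg \<alpha> + deg \<delta>)"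
    using deg_lt_smult[OF s mult_deg_lt_left[OF _ xmon_deg_le[OF \<delta>]]] xmon_mult_commute[OF \<alpha> c] w1_def
    by simp
  ultimately show ?thesis by (simp add: deg_lt_add)
qed

lemma approx_mult:
  assumes s: "s \<in> R" and \<alpha>: "\<alpha> \<in> exps n" and b: "b \<in> deg_le e"
  shows "s * X \<alpha> * b - approx_mult s \<alpha> b \<in> deg_lt (deg \<alpha> + e)"
proof -
  let ?S = "{\<delta>. cf b \<delta> \<noteq> 0}"
  have "s * X \<alpha> * b = (\<Sum>\<delta>\<in>?S. s * X \<alpha> * (cf b \<delta> * X \<delta>))"
    by (subst cf_expansion) (simp add: sum_distrib_left)
  then have eq: "s * X \<alpha> * b - approx_mult s \<alpha> b = (\<Sum>\<delta>\<in>?S. s * X \<alpha> * (cf b \<delta> * X \<delta>)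
      - (s * sigp \<alpha> (cf b \<delta>) * cab R x n \<alpha> \<delta>) * X (add_exp \<alpha> \<delta>))"
    by (simp add: approx_mult_def sum_subtractf)
  have "s * X \<alpha> * (cf b \<delta> * X \<delta>) - (s * sigp \<alpha> (cf b \<delta>) * cab R x n \<alpha> \<delta>) * X (add_exp \<alpha> \<delta>)
      \<in> deg_lt (deg \<alpha> + e)" if \<delta>: "\<delta> \<in> ?S" for \<delta>
  proof -
    have "\<delta> \<in> exps n" "deg \<delta> \<le> e" using \<delta> cf_nonzero_exps deg_le_cf[OF b] by auto
    then show ?thesis using deg_lt_mono[OF approx_mult_monom[OF \<alpha> _ s cf_in_R]] by simp
  qed
  then show ?thesis unfolding eq by (rule deg_lt_sum)
qed

lemma cf_approx_mult:
  assumes s: "s \<in> R" and \<alpha>: "\<alpha> \<in> exps n"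
  shows "cf (approx_mult s \<alpha> b) \<mu> = (\<Sum>\<delta>\<in>{\<delta>. cf b \<delta> \<noteq> 0}.
      if add_exp \<alpha> \<delta> = \<mu> then s * sigp \<alpha> (cf b \<delta>) * cab R x n \<alpha> \<delta> else 0)"
  unfolding approx_mult_def cf_sum
proof (rule sum.cong)
  fix \<delta> assume "\<delta> \<in> {\<delta>. cf b \<delta> \<noteq> 0}"
  then have "\<delta> \<in> exps n" using cf_nonzero_exps by blast
  moreover have "s * sigp \<alpha> (cf b \<delta>) * cab R x n \<alpha> \<delta> \<in> R"
    using s sigma_pow_in_R[OF \<alpha> cf_in_R] by (simp add: R_mult cab_def)
  ultimately show "cf ((s * sigp \<alpha> (cf b \<delta>) * cab R x n \<alpha> \<delta>) * X (add_exp \<alpha> \<delta>)) \<mu> =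
      (if add_exp \<alpha> \<delta> = \<mu> then s * sigp \<alpha> (cf b \<delta>) * cab R x n \<alpha> \<delta> else 0)"
    using cf_monom add_exp_exps[OF \<alpha>] by auto
qed simp

subsection \<open>The quasi-commutative case\<close>

lemma quasi_comm_var_mult:
  assumes q: "quasi_comm R x n" and i: "i < n" and s: "s \<in> R"
  shows "x i * s = sig i s * x i"
proof (cases "s = 0")
  case True
  then show ?thesis by (simp add: sigma_def)
next
  case False
  then obtain c where c: "c \<in> R" "x i * s = c * x i"
    using q i s False unfolding quasi_comm_def by blast
  have "sig i s = c"
    unfolding sigma_def c(2) using cf_monom[OF c(1) unit_exp_exps[OF i]] xmon_unit_exp[OF i, of x]
    by simp
  then show ?thesis using c by simp
qed

lemma quasi_comm_var_mult_xmon: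
  assumes q: "quasi_comm R x n"
  shows "i < n \<Longrightarrow> \<beta> \<in> exps n \<Longrightarrow> \<exists>c\<in>R. x i * X \<beta> = c * X (\<beta>(i := Suc (\<beta> i)))"
proof (induction "deg \<beta>" arbitrary: i \<beta> rule: less_induct)
  case less
  show ?case
  proof (cases "\<forall>k<i. \<beta> k = 0")
    case True
    then show ?thesis using xmon_fun_upd_Suc[OF less.prems(1) True, where x = x]
      by (intro bexI[of _ 1]) auto
  next
    case False
    then obtain k where k: "k < i" "\<beta> k \<noteq> 0" by blast
    then obtain j \<beta>' where "j \<le> k" and j: "j < n" and \<beta>': "\<beta>' \<in> exps n" "\<forall>k<j. \<beta>' k = 0"
      and \<beta>: "\<beta> = \<beta>'(j := Suc (\<beta>' j))"
      using exps_split_first_nonzero[OF less.prems(2)] by metis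
    then have ji: "j < i" using k by simp
    have "deg \<beta> = Suc (deg \<beta>')" using deg_exp_fun_upd_Suc[OF j, of \<beta>'] \<beta> by simp
    then obtain s where s: "s \<in> R" "x i * X \<beta>' = s * X (\<beta>'(i := Suc (\<beta>' i)))"
      using less.hyps[OF _ less.prems(1) \<beta>'(1)] by auto
    obtain c where c: "c \<in> R" "x i * x j = c * x j * x i"
      using q j less.prems(1) unfolding quasi_comm_def by blast
    have X\<beta>: "X \<beta> = x j * X \<beta>'" using xmon_fun_upd_Suc[OF j \<beta>'(2), where x = x] \<beta> by simp
    have X\<gamma>: "x j * X (\<beta>'(i := Suc (\<beta>' i))) = X (\<beta>(i := Suc (\<beta> i)))"
      using xmon_fun_upd_Suc[OF j, of "\<beta>'(i := Suc (\<beta>' i))" x] \<beta>' ji \<beta>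
      by (simp add: fun_upd_twist)
    have "x i * X \<beta> = c * (x j * (x i * X \<beta>'))"
      by (simp add: X\<beta> mult.assoc[symmetric] c(2))
    also have "\<dots> = (c * sig j s) * X (\<beta>(i := Suc (\<beta> i)))"
      by (simp add: s(2) mult.assoc[symmetric] quasi_comm_var_mult[OF q j s(1)])
        (simp add: mult.assoc X\<gamma>)
    finally show ?thesis using c(1) sigma_in_R[OF j s(1)] by blast
  qed
qed

lemma quasi_comm_xmon_mult:
  assumes q: "quasi_comm R x n" and "\<alpha> \<in> exps n" and r: "r \<in> R"
  shows "X \<alpha> * r = sigp \<alpha> r * X \<alpha>"
  using assms(2)
proof (induction \<alpha> rule: exps_induct)
  case zero
  then show ?case by simp
next
  case (step \<alpha> j)
  have "X (\<alpha>(j := Suc (\<alpha> j))) * r = x j * (X \<alpha> * r)"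
    using xmon_fun_upd_Suc[OF step(2,3), where x = x] by (simp add: mult.assoc)
  also have "\<dots> = sig j (sigp \<alpha> r) * (x j * X \<alpha>)"
    using step.IH quasi_comm_var_mult[OF q step(2) sigma_pow_in_R[OF step(1) r]]
    by (simp add: mult.assoc[symmetric])
  finally show ?case
    using xmon_fun_upd_Suc[OF step(2,3), where x = x] sigma_pow_fun_upd_Suc[OF step(2,3), where R = R and x = x]
    by (simp del: fun_upd_apply)
qed

lemma quasi_comm_xmon_mult_xmon:
  assumes q: "quasi_comm R x n" and \<alpha>: "\<alpha> \<in> exps n" and \<beta>: "\<beta> \<in> exps n"
  shows "X \<alpha> * X \<beta> = cab R x n \<alpha> \<beta> * X (add_exp \<alpha> \<beta>)"
proof -
  have "\<exists>s\<in>R. X \<alpha> * X \<beta> = s * X (add_exp \<alpha> \<beta>)"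
    using \<alpha>
  proof (induction \<alpha> rule: exps_induct)
    case zero
    then show ?case by (intro bexI[of _ 1]) (auto simp: add_exp_def)
  next
    case (step \<alpha> j)
    obtain s where s: "s \<in> R" "X \<alpha> * X \<beta> = s * X (add_exp \<alpha> \<beta>)" using step.IH by blast
    obtain c where c: "c \<in> R"
      "x j * X (add_exp \<alpha> \<beta>) = c * X ((add_exp \<alpha> \<beta>)(j := Suc (add_exp \<alpha> \<beta> j)))"
      using quasi_comm_var_mult_xmon[OF q step(2) add_exp_exps[OF step(1) \<beta>]] by blast
    have "X (\<alpha>(j := Suc (\<alpha> j))) * X \<beta> = (x j * s) * X (add_exp \<alpha> \<beta>)"
      using xmon_fun_upd_Suc[OF step(2,3), where x = x] s(2) by (simp add: mult.assoc)
    also have "\<dots> = (sig j s * c) * X (add_exp (\<alpha>(j := Suc (\<alpha> j))) \<beta>)"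
      by (simp add: quasi_comm_var_mult[OF q step(2) s(1)] mult.assoc c(2) add_exp_fun_upd_Suc
          del: fun_upd_apply)
    finally show ?case using sigma_in_R[OF step(2) s(1)] c(1) by blast
  qed
  then obtain s where s: "s \<in> R" "X \<alpha> * X \<beta> = s * X (add_exp \<alpha> \<beta>)" by blast
  then have "cab R x n \<alpha> \<beta> = s"
    unfolding cab_def using cf_monom[OF s(1) add_exp_exps[OF \<alpha> \<beta>]] by simp
  then show ?thesis using s by simp
qed

end

section \<open>Leading monomials of vectors\<close>

locale sigma_pbw_ordered = sigma_pbw R x n for R :: "'a::ring_1 set" and x n +
  fixes m :: nat and le :: "(nat \<Rightarrow> nat) \<Rightarrow> (nat \<Rightarrow> nat) \<Rightarrow> bool"
    and leM :: "(nat \<Rightarrow> nat) \<times> nat \<Rightarrow> (nat \<Rightarrow> nat) \<times> nat \<Rightarrow> bool"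
  assumes ordA: "mon_order_A R x n le" and ordM: "mon_order_M R x n m le leM"
    and cab_unit: "\<forall>\<alpha>\<in>exps n. \<forall>\<beta>\<in>exps n. unit_in R (cab R x n \<alpha> \<beta>)"
    and nontrivial: "(1::'a) \<noteq> 0" \<comment> \<open>the trivial ring is treated separately\<close>
begin

abbreviation "vmons \<equiv> exps n \<times> {..<m}"

lemmas ordA_conjs = ordA[unfolded mon_order_A_def]
lemmas ordM_conjs = ordM[unfolded mon_order_M_def Let_def]

lemma mon_le_refl: "\<alpha> \<in> exps n \<Longrightarrow> le \<alpha> \<alpha>"
  using ordA_conjs[THEN conjunct1] by blast

lemma mon_le_antisym: "\<alpha> \<in> exps n \<Longrightarrow> \<beta> \<in> exps n \<Longrightarrow> le \<alpha> \<beta> \<Longrightarrow> le \<beta> \<alpha> \<Longrightarrow> \<alpha> = \<beta>"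
  using ordA_conjs[THEN conjunct2, THEN conjunct1] by blast

lemma mon_le_deg: "\<alpha> \<in> exps n \<Longrightarrow> \<beta> \<in> exps n \<Longrightarrow> deg \<alpha> < deg \<beta> \<Longrightarrow> le \<alpha> \<beta>"
  using ordA_conjs[THEN conjunct2, THEN conjunct2, THEN conjunct2, THEN conjunct2, THEN conjunct2,
      THEN conjunct2] by blast

lemma leM_refl: "K \<in> vmons \<Longrightarrow> leM K K"
  using ordM_conjs[THEN conjunct1] by blast

lemma leM_antisym: "K \<in> vmons \<Longrightarrow> L \<in> vmons \<Longrightarrow> leM K L \<Longrightarrow> leM L K \<Longrightarrow> K = L"
  using ordM_conjs[THEN conjunct2, THEN conjunct1] by blast

lemma leM_trans: "K \<in> vmons \<Longrightarrow> L \<in> vmons \<Longrightarrow> N \<in> vmons \<Longrightarrow> leM K L \<Longrightarrow> leM L N \<Longrightarrow> leM K N"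
  using ordM_conjs[THEN conjunct2, THEN conjunct2, THEN conjunct1] by blast

lemma leM_total: "K \<in> vmons \<Longrightarrow> L \<in> vmons \<Longrightarrow> leM K L \<or> leM L K"
  using ordM_conjs[THEN conjunct2, THEN conjunct2, THEN conjunct2, THEN conjunct1] by blast

lemma leM_mult:
  "\<alpha> \<in> exps n \<Longrightarrow> \<beta> \<in> exps n \<Longrightarrow> \<gamma> \<in> exps n \<Longrightarrow> i < m \<Longrightarrow> j < m \<Longrightarrow> leM (\<alpha>, i) (\<beta>, j) \<Longrightarrow>
     leM (lmA R x n le (X \<gamma> * X \<alpha>), i) (lmA R x n le (X \<gamma> * X \<beta>), j)"
  using ordM_conjs[THEN conjunct2, THEN conjunct2, THEN conjunct2, THEN conjunct2, THEN conjunct2,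
      THEN conjunct1] by blast

lemma leM_deg_less:
  "\<alpha> \<in> exps n \<Longrightarrow> \<beta> \<in> exps n \<Longrightarrow> i < m \<Longrightarrow> j < m \<Longrightarrow> deg \<alpha> < deg \<beta> \<Longrightarrow> leM (\<alpha>, i) (\<beta>, j)"
  using ordM_conjs[THEN conjunct2, THEN conjunct2, THEN conjunct2, THEN conjunct2, THEN conjunct2,
      THEN conjunct2] by blast

abbreviation "vs \<equiv> vsupp R x n m"
abbreviation "lm \<equiv> lmv R x n m leM"
abbreviation "lc \<equiv> lcv R x n m leM"

lemma cab_nonzero: "\<alpha> \<in> exps n \<Longrightarrow> \<beta> \<in> exps n \<Longrightarrow> cab R x n \<alpha> \<beta> \<noteq> 0"
  using cab_unit nontrivial unfolding unit_in_def by fastforce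

lemma mult_cab_nonzero: "\<alpha> \<in> exps n \<Longrightarrow> \<beta> \<in> exps n \<Longrightarrow> s \<noteq> 0 \<Longrightarrow> s * cab R x n \<alpha> \<beta> \<noteq> 0"
  using cab_unit unfolding unit_in_def by (metis mult.assoc mult_1_right mult_zero_left)

lemma lmA_xmon_mult_xmon:
  assumes \<alpha>: "\<alpha> \<in> exps n" and \<delta>: "\<delta> \<in> exps n"
  shows "lmA R x n le (X \<alpha> * X \<delta>) = add_exp \<alpha> \<delta>"
  unfolding lmA_def
proof (rule the_equality)
  let ?P = "X \<alpha> * X \<delta>" and ?\<mu> = "add_exp \<alpha> \<delta>"
  have \<mu>: "?\<mu> \<in> exps n" using add_exp_exps[OF \<alpha> \<delta>] .
  have err: "?P - cab R x n \<alpha> \<delta> * X ?\<mu> \<in> deg_lt (deg ?\<mu>)"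
    using xmon_mult_xmon[OF \<alpha> \<delta>] deg_exp_add by simp
  have mem: "?\<mu> \<in> supp R x n ?P"
    unfolding supp_def using cab_nonzero[OF \<alpha> \<delta>] by (simp add: cab_def)
  have "le \<beta> ?\<mu>" if \<beta>: "\<beta> \<in> supp R x n ?P" for \<beta>
  proof (cases "\<beta> = ?\<mu>")
    case True
    then show ?thesis using mon_le_refl[OF \<mu>] by simp
  next
    case False
    then have "cf (?P - cab R x n \<alpha> \<delta> * X ?\<mu>) \<beta> \<noteq> 0"
      using \<beta> cf_monom[OF cf_in_R \<mu>] by (simp add: supp_def cf_diff cab_def)
    then have "deg \<beta> < deg ?\<mu>" using err by (auto simp: deg_lt_def)
    moreover have "\<beta> \<in> exps n" using \<beta> cf_nonzero_exps by (auto simp: supp_def)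
    ultimately show ?thesis using mon_le_deg \<mu> by blast
  qed
  then have max: "\<forall>\<beta>\<in>supp R x n ?P. le \<beta> ?\<mu>" by blast
  then show "?\<mu> \<in> supp R x n ?P \<and> (\<forall>\<beta>\<in>supp R x n ?P. le \<beta> ?\<mu>)" using mem by blast
  fix \<beta> assume \<beta>: "\<beta> \<in> supp R x n ?P \<and> (\<forall>\<gamma>\<in>supp R x n ?P. le \<gamma> \<beta>)"
  then have "\<beta> \<in> exps n" using cf_nonzero_exps by (auto simp: supp_def)
  then show "\<beta> = ?\<mu>" using mon_le_antisym[OF _ \<mu>] \<beta> max mem by blast
qed

lemma leM_add_exp_mono:
  "\<alpha> \<in> exps n \<Longrightarrow> \<delta> \<in> exps n \<Longrightarrow> \<gamma> \<in> exps n \<Longrightarrow> i < m \<Longrightarrow> j < m \<Longrightarrow>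
   leM (\<delta>, j) (\<gamma>, i) \<Longrightarrow> leM (add_exp \<alpha> \<delta>, j) (add_exp \<alpha> \<gamma>, i)"
  using leM_mult[of \<delta> \<gamma> \<alpha> j i] lmA_xmon_mult_xmon by simp

lemma leM_imp_deg_le: "(\<delta>, j) \<in> vmons \<Longrightarrow> (\<gamma>, i) \<in> vmons \<Longrightarrow> leM (\<delta>, j) (\<gamma>, i) \<Longrightarrow> deg \<delta> \<le> deg \<gamma>"
proof (rule ccontr)
  assume "(\<delta>, j) \<in> vmons" "(\<gamma>, i) \<in> vmons" "leM (\<delta>, j) (\<gamma>, i)" "\<not> deg \<delta> \<le> deg \<gamma>"
  moreover from this have "leM (\<gamma>, i) (\<delta>, j)" using leM_deg_less by auto
  ultimately show False using leM_antisym by fastforce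
qed

lemma vsupp_iff: "(\<alpha>, i) \<in> vs v \<longleftrightarrow> i < m \<and> cf (v i) \<alpha> \<noteq> 0"
  by (simp add: vsupp_def supp_def)

lemma vsupp_subset: "vs v \<subseteq> vmons"
  using cf_nonzero_exps by (auto simp: vsupp_def supp_def)

lemma finite_vsupp: "finite (vs v)"
proof (rule finite_subset)
  show "vs v \<subseteq> (\<Union>i<m. {\<alpha>. cf (v i) \<alpha> \<noteq> 0} \<times> {i})" by (auto simp: vsupp_def supp_def)
qed simp

lemma vsupp_empty_iff: "vec_in m v \<Longrightarrow> vs v = {} \<longleftrightarrow> v = (\<lambda>_. 0)"
  unfolding vec_in_def vsupp_def supp_def
  by (auto simp: fun_eq_iff) (metis cf_eq_0D not_le)

lemma leM_max_exists: "finite S \<Longrightarrow> S \<noteq> {} \<Longrightarrow> S \<subseteq> vmons \<Longrightarrow> \<exists>K\<in>S. \<forall>L\<in>S. leM L K"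
proof (induction S rule: finite_ne_induct)
  case (singleton a)
  then show ?case using leM_refl by auto
next
  case (insert a S)
  then obtain K where K: "K \<in> S" "\<forall>L\<in>S. leM L K" by auto
  have "a \<in> vmons" "K \<in> vmons" "S \<subseteq> vmons" using insert K by auto
  then show ?case
    using K leM_total[of a K] leM_trans[of _ K a] leM_refl[of a] by (metis insert_iff subsetD)
qed

lemma lm_eqI: "K \<in> vs v \<Longrightarrow> \<forall>L\<in>vs v. leM L K \<Longrightarrow> lm v = Some K"
proof -
  assume K: "K \<in> vs v" "\<forall>L\<in>vs v. leM L K"
  have "(THE K. K \<in> vs v \<and> (\<forall>L\<in>vs v. leM L K)) = K"
    using K leM_antisym vsupp_subset by (intro the_equality) blast+
  then show ?thesis unfolding lmv_def using K by auto
qed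

lemma lm_SomeD: "lm v = Some K \<Longrightarrow> K \<in> vs v \<and> (\<forall>L\<in>vs v. leM L K)"
proof -
  assume lm: "lm v = Some K"
  then have "vs v \<noteq> {}" unfolding lmv_def by (auto split: if_splits)
  then obtain K' where "K' \<in> vs v" "\<forall>L\<in>vs v. leM L K'"
    using leM_max_exists[OF finite_vsupp _ vsupp_subset] by blast
  moreover from this have "lm v = Some K'" by (rule lm_eqI)
  ultimately show ?thesis using lm by simp
qed

lemma lm_in_MM: "lm v = Some K \<Longrightarrow> K \<in> vmons"
  using lm_SomeD vsupp_subset by blast

lemma lm_None_iff: "vec_in m v \<Longrightarrow> lm v = None \<longleftrightarrow> v = (\<lambda>_. 0)"
proof -
  assume v: "vec_in m v"
  show ?thesis
  proof (cases "vs v = {}")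
    case True
    then show ?thesis using vsupp_empty_iff[OF v] by (simp add: lmv_def)
  next
    case False
    then obtain K where "K \<in> vs v" "\<forall>L\<in>vs v. leM L K"
      using leM_max_exists[OF finite_vsupp _ vsupp_subset] by blast
    then show ?thesis using lm_eqI vsupp_empty_iff[OF v] False by auto
  qed
qed

lemma lc_eq: "lm v = Some (\<alpha>, i) \<Longrightarrow> lc v = cf (v i) \<alpha>"
  by (simp add: lcv_def)

definition strictly_below :: "(nat \<Rightarrow> nat) \<times> nat \<Rightarrow> (nat \<Rightarrow> 'a) \<Rightarrow> bool" where
  "strictly_below K v \<longleftrightarrow> (\<forall>L\<in>vs v. leM L K \<and> L \<noteq> K)"

definition lm_below :: "(nat \<Rightarrow> 'a) \<Rightarrow> (nat \<Rightarrow> 'a) \<Rightarrow> bool" where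
  "lm_below p f \<longleftrightarrow> p = (\<lambda>_. 0) \<or> mgt leM (lm f) (lm p)"

lemma leM_less_trans:
  assumes "N \<in> vmons" "L \<in> vmons" "K \<in> vmons" "leM N L" "leM L K" "L \<noteq> K"
  shows "leM N K \<and> N \<noteq> K"
proof
  show "leM N K" using leM_trans[of N L K] assms by simp
  show "N \<noteq> K" using leM_antisym[of L K] assms by auto
qed

lemma strictly_below_iff:
  assumes K: "K \<in> vmons" and v: "vec_in m v"
  shows "v = (\<lambda>_. 0) \<or> mgt leM (Some K) (lm v) \<longleftrightarrow> strictly_below K v"
proof (cases "v = (\<lambda>_. 0)")
  case True
  then show ?thesis using vsupp_empty_iff[OF v] by (simp add: strictly_below_def)
next
  case False
  then obtain L where L: "lm v = Some L" using lm_None_iff[OF v] by (cases "lm v") auto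
  have "L \<in> vmons" "L \<in> vs v" "\<forall>N\<in>vs v. leM N L" using lm_SomeD[OF L] lm_in_MM[OF L] by auto
  then have "strictly_below K v \<longleftrightarrow> leM L K \<and> L \<noteq> K"
    unfolding strictly_below_def using K vsupp_subset leM_less_trans[OF _ \<open>L \<in> vmons\<close> K] by blast
  then show ?thesis using L False by auto
qed

lemma lm_below_iff: "vec_in m p \<Longrightarrow> lm f = Some K \<Longrightarrow> lm_below p f \<longleftrightarrow> strictly_below K p"
  unfolding lm_below_def using strictly_below_iff lm_in_MM by simp

lemma vsupp_add: "vs (\<lambda>j. a j + b j) \<subseteq> vs a \<union> vs b"
  by (auto simp: vsupp_iff cf_add)

lemma vsupp_diff: "vs (\<lambda>j. a j - b j) \<subseteq> vs a \<union> vs b"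
  by (auto simp: vsupp_iff cf_diff)

lemma vsupp_sum: "vs (\<lambda>j. \<Sum>k\<in>I. f k j) \<subseteq> (\<Union>k\<in>I. vs (f k))"
proof
  fix L assume L: "L \<in> vs (\<lambda>j. \<Sum>k\<in>I. f k j)"
  obtain \<mu> j where L_eq: "L = (\<mu>, j)" by (cases L)
  have "j < m" "(\<Sum>k\<in>I. cf (f k j) \<mu>) \<noteq> 0" using L L_eq by (auto simp: vsupp_iff cf_sum)
  then obtain k where "k \<in> I" "cf (f k j) \<mu> \<noteq> 0"
    using sum.neutral[of I "\<lambda>k. cf (f k j) \<mu>"] by blast
  then show "L \<in> (\<Union>k\<in>I. vs (f k))" using \<open>j < m\<close> L_eq by (auto simp: vsupp_iff)
qed

lemma strictly_below_add: "strictly_below K a \<Longrightarrow> strictly_below K b \<Longrightarrow> strictly_below K (\<lambda>j. a j + b j)"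
  using vsupp_add unfolding strictly_below_def by blast

lemma strictly_below_sum:
  "(\<And>k. k \<in> I \<Longrightarrow> strictly_below K (f k)) \<Longrightarrow> strictly_below K (\<lambda>j. \<Sum>k\<in>I. f k j)"
  using vsupp_sum unfolding strictly_below_def by blast

lemma vec_in_add: "vec_in m a \<Longrightarrow> vec_in m b \<Longrightarrow> vec_in m (\<lambda>j. a j + b j)"
  by (simp add: vec_in_def)

lemma vec_in_xv: "vec_in m a \<Longrightarrow> vec_in m (xv x n \<theta> a)"
  by (simp add: vec_in_def xv_def)

lemma lm_add_strictly_below:
  assumes a: "lm a = Some (\<alpha>, i)" and b: "strictly_below (\<alpha>, i) b"
  shows "lm (\<lambda>j. a j + b j) = Some (\<alpha>, i)" and "cf (a i + b i) \<alpha> = cf (a i) \<alpha>"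
    and "(\<lambda>j. a j + b j) \<noteq> (\<lambda>_. 0)"
proof -
  have a_max: "(\<alpha>, i) \<in> vs a" "\<forall>L\<in>vs a. leM L (\<alpha>, i)" using lm_SomeD[OF a] by auto
  have "(\<alpha>, i) \<notin> vs b" "i < m" using b a_max(1) by (auto simp: strictly_below_def vsupp_iff)
  then show cf: "cf (a i + b i) \<alpha> = cf (a i) \<alpha>" by (simp add: vsupp_iff cf_add)
  then have mem: "(\<alpha>, i) \<in> vs (\<lambda>j. a j + b j)" using a_max(1) by (simp add: vsupp_iff)
  have "\<forall>L\<in>vs (\<lambda>j. a j + b j). leM L (\<alpha>, i)"
    using vsupp_add a_max(2) b unfolding strictly_below_def by blast
  with mem show "lm (\<lambda>j. a j + b j) = Some (\<alpha>, i)" by (rule lm_eqI)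
  show "(\<lambda>j. a j + b j) \<noteq> (\<lambda>_. 0)"
  proof
    assume "(\<lambda>j. a j + b j) = (\<lambda>_. 0)"
    then have "a i + b i = 0" by (rule fun_cong)
    then show False using mem by (simp add: vsupp_iff)
  qed
qed

lemma lm_add_lm_below:
  assumes b: "vec_in m b" and ba: "lm_below b a"
  shows "lm (\<lambda>j. a j + b j) = lm a"
proof (cases "b = (\<lambda>_. 0)")
  case False
  then obtain \<alpha> i where a: "lm a = Some (\<alpha>, i)"
    using ba by (cases "lm a") (auto simp: lm_below_def)
  then show ?thesis using lm_add_strictly_below(1)[OF a] lm_below_iff[OF b a] ba by simp
qed simp

lemma lm_below_add:
  assumes "vec_in m b" "vec_in m c" "lm_below b a" "lm_below c a"
  shows "lm_below (\<lambda>j. b j + c j) a"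
proof (cases "lm a")
  case None
  then show ?thesis using assms(3,4) by (auto simp: lm_below_def)
next
  case (Some K)
  then have "strictly_below K b" "strictly_below K c" using assms lm_below_iff by auto
  then show ?thesis
    using strictly_below_add lm_below_iff[OF vec_in_add[OF assms(1,2)] Some] by simp
qed

lemma lm_below_trans:
  assumes h: "vec_in m h" and p: "vec_in m p" and hy: "lm_below h y" and ph: "lm_below p h"
  shows "lm_below p y"
proof (cases "p = (\<lambda>_. 0)")
  case False
  then obtain Kh where Kh: "lm h = Some Kh" using ph by (cases "lm h") (auto simp: lm_below_def)
  then have "h \<noteq> (\<lambda>_. 0)" using lm_None_iff[OF h] by auto
  then obtain Ky where Ky: "lm y = Some Ky" using hy by (cases "lm y") (auto simp: lm_below_def)
  have "Kh \<in> vmons" "Ky \<in> vmons" using lm_in_MM Kh Ky by auto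
  moreover have "leM Kh Ky" "Kh \<noteq> Ky"
    using hy lm_SomeD[OF Kh] lm_below_iff[OF h Ky] unfolding strictly_below_def by auto
  moreover have "\<forall>L\<in>vs p. leM L Kh \<and> L \<noteq> Kh"
    using ph lm_below_iff[OF p Kh] unfolding strictly_below_def by auto
  ultimately have "strictly_below Ky p"
    unfolding strictly_below_def using vsupp_subset leM_less_trans[of _ Kh Ky] by blast
  then show ?thesis using lm_below_iff[OF p Ky] by simp
qed (simp add: lm_below_def)

lemma vec_entry_deg_le:
  assumes g: "vec_in m g" and K: "(\<gamma>, i) \<in> vmons" and g_le: "\<forall>L\<in>vs g. leM L (\<gamma>, i)"
  shows "g j \<in> deg_le (deg \<gamma>)"
  unfolding deg_le_def
proof (intro CollectI allI impI)
  fix \<delta> assume \<delta>: "cf (g j) \<delta> \<noteq> 0"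
  then have "j < m" using g by (metis cf_0 not_le vec_in_def)
  then have "(\<delta>, j) \<in> vs g" using \<delta> by (simp add: vsupp_iff)
  then show "deg \<delta> \<le> deg \<gamma>" using leM_imp_deg_le[OF _ K] g_le vsupp_subset by blast
qed

lemma vsupp_mult_le:
  assumes s: "s \<in> R" and \<alpha>: "\<alpha> \<in> exps n"
    and g: "vec_in m g" and K: "(\<gamma>, i) \<in> vmons" and g_le: "\<forall>L\<in>vs g. leM L (\<gamma>, i)"
  shows "\<forall>L\<in>vs (\<lambda>j. s * X \<alpha> * g j). leM L (add_exp \<alpha> \<gamma>, i)"
proof
  fix L assume L: "L \<in> vs (\<lambda>j. s * X \<alpha> * g j)"
  obtain \<mu> j where L_eq: "L = (\<mu>, j)" by (cases L)
  have j: "j < m" and nz: "cf (s * X \<alpha> * g j) \<mu> \<noteq> 0" using L L_eq by (auto simp: vsupp_iff)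
  have \<gamma>: "\<gamma> \<in> exps n" and i: "i < m" and \<mu>: "\<mu> \<in> exps n" using K nz cf_nonzero_exps by auto
  define E where "E = s * X \<alpha> * g j - approx_mult s \<alpha> (g j)"
  have E: "E \<in> deg_lt (deg \<alpha> + deg \<gamma>)"
    unfolding E_def by (rule approx_mult[OF s \<alpha> vec_entry_deg_le[OF g K g_le]])
  have "cf (s * X \<alpha> * g j) \<mu> = cf (approx_mult s \<alpha> (g j)) \<mu> + cf E \<mu>"
    by (simp add: E_def cf_diff)
  then consider "cf E \<mu> \<noteq> 0" | "cf (approx_mult s \<alpha> (g j)) \<mu> \<noteq> 0" using nz by fastforce
  then show "leM L (add_exp \<alpha> \<gamma>, i)"
  proof cases
    case 1
    then have "deg \<mu> < deg (add_exp \<alpha> \<gamma>)" using E by (auto simp: deg_lt_def deg_exp_add)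
    then show ?thesis using leM_deg_less[OF \<mu> add_exp_exps[OF \<alpha> \<gamma>] j i] L_eq by simp
  next
    case 2
    then obtain \<delta> where \<delta>: "cf (g j) \<delta> \<noteq> 0" "add_exp \<alpha> \<delta> = \<mu>"
      unfolding cf_approx_mult[OF s \<alpha>]
      by (auto elim!: sum.not_neutral_contains_not_neutral split: if_splits)
    then have "leM (\<delta>, j) (\<gamma>, i)" using g_le j by (simp add: vsupp_iff)
    then show ?thesis using leM_add_exp_mono[OF \<alpha> cf_nonzero_exps[OF \<delta>(1)] \<gamma> i j] \<delta>(2) L_eq by simp
  qed
qed

lemma cf_mult_lead:
  assumes s: "s \<in> R" and \<alpha>: "\<alpha> \<in> exps n"
    and g: "vec_in m g" and K: "(\<gamma>, i) \<in> vmons" and g_le: "\<forall>L\<in>vs g. leM L (\<gamma>, i)"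
  shows "cf (s * X \<alpha> * g i) (add_exp \<alpha> \<gamma>) = s * sigp \<alpha> (cf (g i) \<gamma>) * cab R x n \<alpha> \<gamma>"
proof -
  let ?t = "\<lambda>\<delta>. s * sigp \<alpha> (cf (g i) \<delta>) * cab R x n \<alpha> \<delta>"
  define E where "E = s * X \<alpha> * g i - approx_mult s \<alpha> (g i)"
  have "cf E (add_exp \<alpha> \<gamma>) = 0"
    using deg_lt_cf[OF approx_mult[OF s \<alpha> vec_entry_deg_le[OF g K g_le]]]
    by (simp add: E_def deg_exp_add)
  moreover have "cf (approx_mult s \<alpha> (g i)) (add_exp \<alpha> \<gamma>)
      = (\<Sum>\<delta>\<in>{\<delta>. cf (g i) \<delta> \<noteq> 0}. if \<delta> = \<gamma> then ?t \<delta> else 0)"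
    by (simp add: cf_approx_mult[OF s \<alpha>] add_exp_left_cancel)
  moreover have "\<dots> = ?t \<gamma>" using sigma_pow_0[OF \<alpha>] by (simp add: sum.delta)
  moreover have "s * X \<alpha> * g i = approx_mult s \<alpha> (g i) + E" by (simp add: E_def)
  ultimately show ?thesis by (simp add: cf_add)
qed

lemma strictly_below_mult:
  assumes s: "s \<in> R" and \<alpha>: "\<alpha> \<in> exps n"
    and g: "vec_in m g" and K: "(\<gamma>, i) \<in> vmons" and g_below: "strictly_below (\<gamma>, i) g"
  shows "strictly_below (add_exp \<alpha> \<gamma>, i) (\<lambda>j. s * X \<alpha> * g j)"
proof -
  have g_le: "\<forall>L\<in>vs g. leM L (\<gamma>, i)" using g_below by (simp add: strictly_below_def)
  have "cf (g i) \<gamma> = 0" using g_below K by (auto simp: strictly_below_def vsupp_iff)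
  then have "cf (s * X \<alpha> * g i) (add_exp \<alpha> \<gamma>) = 0"
    using cf_mult_lead[OF s \<alpha> g K g_le] sigma_pow_0[OF \<alpha>] by simp
  then show ?thesis
    using vsupp_mult_le[OF s \<alpha> g K g_le] by (auto simp: strictly_below_def vsupp_iff)
qed

lemma deg_lt_mult_strictly_below:
  assumes u: "u \<in> deg_lt d" and g: "\<And>j. g j \<in> deg_le e" and K: "(\<kappa>, i) \<in> vmons"
    and deg: "d + e \<le> deg \<kappa>"
  shows "strictly_below (\<kappa>, i) (\<lambda>j. u * g j)"
  unfolding strictly_below_def
proof
  fix L assume L: "L \<in> vs (\<lambda>j. u * g j)"
  obtain \<mu> j where L_eq: "L = (\<mu>, j)" by (cases L)
  have j: "j < m" and nz: "cf (u * g j) \<mu> \<noteq> 0" using L L_eq by (auto simp: vsupp_iff)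
  have "deg \<mu> < d + e" using mult_deg_lt_left[OF u g[of j]] nz by (auto simp: deg_lt_def)
  then have "deg \<mu> < deg \<kappa>" using deg by simp
  then show "leM L (\<kappa>, i) \<and> L \<noteq> (\<kappa>, i)"
    using leM_deg_less[OF cf_nonzero_exps[OF nz] _ j] K L_eq by auto
qed

section \<open>Reduction\<close>

abbreviation "red F \<equiv> red1 R x n m leM F"

lemma red1_nonzeroE:
  assumes "red F f h" and "f \<noteq> (\<lambda>_. 0)" and lm_f: "lm f = Some (\<beta>, i)"
  obtains t :: nat and g r a \<gamma> where
    "\<And>k. k < t \<Longrightarrow> g k \<in> F \<and> r k \<in> R \<and> a k \<in> exps n \<and> lm (g k) = Some (\<gamma> k, i)
       \<and> add_exp (a k) (\<gamma> k) = \<beta>"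
    "lc f = (\<Sum>k<t. r k * sigp (a k) (lc (g k)) * cab R x n (a k) (\<gamma> k))"
    "h = (\<lambda>j. f j - (\<Sum>k<t. r k * X (a k) * g k j))"
proof -
  have "\<exists>(t::nat) g r a. (\<forall>k<t. g k \<in> F \<and> r k \<in> R \<and> a k \<in> exps n \<and>
      (case (lm f, lm (g k)) of (Some (\<mu>, i'), Some (\<nu>, j')) \<Rightarrow> j' = i' \<and> add_exp (a k) \<nu> = \<mu>
       | _ \<Rightarrow> False))
    \<and> lc f = (\<Sum>k<t. r k * sigp (a k) (lc (g k)) * cab R x n (a k) (fst (the (lm (g k)))))
    \<and> h = (\<lambda>j. f j - (\<Sum>k<t. r k * X (a k) * g k j))"
    using assms(1,2) unfolding red1_def by (elim disjE conjE; (assumption | simp))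
  then obtain t :: nat and g r a where
    A: "\<forall>k<t. g k \<in> F \<and> r k \<in> R \<and> a k \<in> exps n \<and>
      (case (lm f, lm (g k)) of (Some (\<mu>, i'), Some (\<nu>, j')) \<Rightarrow> j' = i' \<and> add_exp (a k) \<nu> = \<mu>
       | _ \<Rightarrow> False)"
    and B: "lc f = (\<Sum>k<t. r k * sigp (a k) (lc (g k)) * cab R x n (a k) (fst (the (lm (g k)))))"
    and C: "h = (\<lambda>j. f j - (\<Sum>k<t. r k * X (a k) * g k j))"
    by (elim exE conjE)
  show ?thesis
  proof (rule that[OF _ B C])
    fix k assume k: "k < t"
    then have case_k: "case (lm f, lm (g k)) of (Some (\<mu>, i'), Some (\<nu>, j')) \<Rightarrow>
        j' = i' \<and> add_exp (a k) \<nu> = \<mu> | _ \<Rightarrow> False"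
      using A by blast
    then obtain \<nu> where "lm (g k) = Some (\<nu>, i)" "add_exp (a k) \<nu> = \<beta>"
      using lm_f by (cases "lm (g k)") auto
    then show "g k \<in> F \<and> r k \<in> R \<and> a k \<in> exps n \<and> lm (g k) = Some (fst (the (lm (g k))), i)
        \<and> add_exp (a k) (fst (the (lm (g k)))) = \<beta>"
      using A k by simp
  qed
qed

lemma red1_nonzeroI:
  assumes "f \<noteq> (\<lambda>_. 0)" and lm_f: "lm f = Some (\<beta>, i)"
    and A: "\<forall>k<(t::nat). g k \<in> F \<and> r k \<in> R \<and> a k \<in> exps n \<and> lm (g k) = Some (\<gamma> k, i)
      \<and> add_exp (a k) (\<gamma> k) = \<beta>"
    and B: "lc f = (\<Sum>k<t. r k * sigp (a k) (lc (g k)) * cab R x n (a k) (\<gamma> k))"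
    and C: "h = (\<lambda>j. f j - (\<Sum>k<t. r k * X (a k) * g k j))"
  shows "red F f h"
proof -
  have "\<forall>k<t. g k \<in> F \<and> r k \<in> R \<and> a k \<in> exps n \<and>
      (case (lm f, lm (g k)) of (Some (\<mu>, i'), Some (\<nu>, j')) \<Rightarrow> j' = i' \<and> add_exp (a k) \<nu> = \<mu>
       | _ \<Rightarrow> False)"
    using A lm_f by auto
  moreover have "lc f = (\<Sum>k<t. r k * sigp (a k) (lc (g k)) * cab R x n (a k) (fst (the (lm (g k)))))"
    using A B by simp
  ultimately show ?thesis
    unfolding red1_def using assms(1) C by blast
qed

lemma red1_from_0: "red F (\<lambda>_. 0) h \<longleftrightarrow> h = (\<lambda>_. 0)"
  by (simp add: red1_def)

lemma red1_vec_in: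
  assumes F: "\<forall>g\<in>F. vec_in m g" and f: "vec_in m f" and red: "red F f h"
  shows "vec_in m h"
proof (cases "f = (\<lambda>_. 0)")
  case True
  then show ?thesis using red red1_from_0 by (simp add: vec_in_def)
next
  case False
  then obtain \<beta> i where "lm f = Some (\<beta>, i)" using lm_None_iff[OF f] by (cases "lm f") auto
  then obtain t :: nat and g r a \<gamma> where A: "\<And>k. k < t \<Longrightarrow> g k \<in> F \<and> r k \<in> R
      \<and> a k \<in> exps n \<and> lm (g k) = Some (\<gamma> k, i) \<and> add_exp (a k) (\<gamma> k) = \<beta>"
    and "lc f = (\<Sum>k<t. r k * sigp (a k) (lc (g k)) * cab R x n (a k) (\<gamma> k))"
    and h: "h = (\<lambda>j. f j - (\<Sum>k<t. r k * X (a k) * g k j))"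
    by (rule red1_nonzeroE[OF red False]) (rule that)
  show ?thesis unfolding vec_in_def
  proof (intro allI impI)
    fix j assume "m \<le> j"
    then have "f j = 0" "\<forall>k<t. g k j = 0" using F f A by (auto simp: vec_in_def)
    then show "h j = 0" using h by simp
  qed
qed

lemma redp_vec_in:
  assumes F: "\<forall>g\<in>F. vec_in m g"
  shows "(red F)\<^sup>+\<^sup>+ f h \<Longrightarrow> vec_in m f \<Longrightarrow> vec_in m h"
  by (induction rule: tranclp_induct) (use red1_vec_in[OF F] in blast)+

lemma reducer_lm_facts:
  assumes "\<forall>g\<in>F. vec_in m g" and "g \<in> F" and "lm g = Some (\<gamma>, i)"
  shows "vec_in m g" and "(\<gamma>, i) \<in> vmons" and "\<forall>L\<in>vs g. leM L (\<gamma>, i)" and "lc g = cf (g i) \<gamma>"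
  using assms lm_SomeD lm_in_MM lc_eq by auto

text \<open>Adding a vector strictly below the leading monomial does not change the leading term,
  so the same reduction data apply.\<close>

lemma red1_add_lm_below:
  assumes f: "vec_in m f" and p: "vec_in m p" and red: "red F f h" and below: "lm_below p f"
  shows "red F (\<lambda>j. f j + p j) (\<lambda>j. h j + p j)"
proof (cases "p = (\<lambda>_. 0)")
  case True
  then show ?thesis using red by simp
next
  case False
  then obtain \<beta> i where lm_f: "lm f = Some (\<beta>, i)"
    using below by (cases "lm f") (auto simp: lm_below_def)
  have f_nz: "f \<noteq> (\<lambda>_. 0)" using lm_f lm_None_iff[OF f] by auto
  obtain t :: nat and g r a \<gamma> where A: "\<And>k. k < t \<Longrightarrow> g k \<in> F \<and> r k \<in> R \<and> a k \<in> exps n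
      \<and> lm (g k) = Some (\<gamma> k, i) \<and> add_exp (a k) (\<gamma> k) = \<beta>"
    and B: "lc f = (\<Sum>k<t. r k * sigp (a k) (lc (g k)) * cab R x n (a k) (\<gamma> k))"
    and C: "h = (\<lambda>j. f j - (\<Sum>k<t. r k * X (a k) * g k j))"
    by (rule red1_nonzeroE[OF red f_nz lm_f]) (rule that)
  have strict: "strictly_below (\<beta>, i) p" using lm_below_iff[OF p lm_f] below by simp
  note lm_sum = lm_add_strictly_below[OF lm_f strict]
  have "lc (\<lambda>j. f j + p j) = lc f" using lm_sum(1,2) lc_eq lm_f by simp
  then show ?thesis using A B C by (intro red1_nonzeroI[OF lm_sum(3,1)]) auto
qed

lemma red1_lm_below:
  assumes F: "\<forall>g\<in>F. vec_in m g" and f: "vec_in m f" and red: "red F f h"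
  shows "lm_below h f"
proof (cases "f = (\<lambda>_. 0)")
  case True
  then show ?thesis using red red1_from_0 by (simp add: lm_below_def)
next
  case False
  then obtain \<beta> i where lm_f: "lm f = Some (\<beta>, i)" using lm_None_iff[OF f] by (cases "lm f") auto
  obtain t :: nat and g r a \<gamma> where A: "\<And>k. k < t \<Longrightarrow> g k \<in> F \<and> r k \<in> R \<and> a k \<in> exps n
      \<and> lm (g k) = Some (\<gamma> k, i) \<and> add_exp (a k) (\<gamma> k) = \<beta>"
    and B: "lc f = (\<Sum>k<t. r k * sigp (a k) (lc (g k)) * cab R x n (a k) (\<gamma> k))"
    and C: "h = (\<lambda>j. f j - (\<Sum>k<t. r k * X (a k) * g k j))"
    by (rule red1_nonzeroE[OF red False lm_f]) (rule that)
  have term_le: "\<forall>L\<in>vs (\<lambda>j. r k * X (a k) * g k j). leM L (\<beta>, i)"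
    and term_lead: "cf (r k * X (a k) * g k i) \<beta> = r k * sigp (a k) (lc (g k)) * cab R x n (a k) (\<gamma> k)"
    if k: "k < t" for k
  proof -
    have r: "r k \<in> R" and a: "a k \<in> exps n" and "add_exp (a k) (\<gamma> k) = \<beta>"
      and "g k \<in> F" "lm (g k) = Some (\<gamma> k, i)" using A[OF k] by auto
    note gk = reducer_lm_facts[OF F this(4,5)]
    from \<open>add_exp (a k) (\<gamma> k) = \<beta>\<close> show "\<forall>L\<in>vs (\<lambda>j. r k * X (a k) * g k j). leM L (\<beta>, i)"
      and "cf (r k * X (a k) * g k i) \<beta> = r k * sigp (a k) (lc (g k)) * cab R x n (a k) (\<gamma> k)"
      using vsupp_mult_le[OF r a gk(1-3)] cf_mult_lead[OF r a gk(1-3)] gk(4) by simp_all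
  qed
  have "\<forall>L\<in>vs h. leM L (\<beta>, i)"
  proof
    fix L assume "L \<in> vs h"
    then have "L \<in> vs f \<union> vs (\<lambda>j. \<Sum>k<t. r k * X (a k) * g k j)"
      unfolding C by (rule subsetD[OF vsupp_diff])
    then have "L \<in> vs f \<or> (\<exists>k<t. L \<in> vs (\<lambda>j. r k * X (a k) * g k j))"
      using vsupp_sum[of "\<lambda>k j. r k * X (a k) * g k j" "{..<t}"] by auto
    then show "leM L (\<beta>, i)" using lm_SomeD[OF lm_f] term_le by auto
  qed
  moreover have "cf (h i) \<beta> = lc f - (\<Sum>k<t. cf (r k * X (a k) * g k i) \<beta>)"
    using lc_eq[OF lm_f] by (simp add: C cf_diff cf_sum)
  then have "cf (h i) \<beta> = 0" using B term_lead by simp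
  ultimately have "strictly_below (\<beta>, i) h"
    unfolding strictly_below_def by (auto simp: vsupp_iff)
  then show ?thesis using lm_below_iff[OF red1_vec_in[OF F f red] lm_f] by simp
qed

lemma xv_eq: "xv x n \<theta> f = (\<lambda>j. X \<theta> * f j)"
  by (simp add: xv_def)

lemma lm_xv:
  assumes \<theta>: "\<theta> \<in> exps n" and f: "vec_in m f" and lm_f: "lm f = Some (\<beta>, i)"
  shows "lm (xv x n \<theta> f) = Some (add_exp \<theta> \<beta>, i)"
proof (rule lm_eqI)
  have K: "(\<beta>, i) \<in> vmons" and f_le: "\<forall>L\<in>vs f. leM L (\<beta>, i)" and "cf (f i) \<beta> \<noteq> 0"
    using lm_SomeD[OF lm_f] lm_in_MM[OF lm_f] by (auto simp: vsupp_iff)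
  then have "sigp \<theta> (cf (f i) \<beta>) * cab R x n \<theta> \<beta> \<noteq> 0"
    using mult_cab_nonzero[OF \<theta>] sigma_pow_nonzero[OF \<theta> cf_in_R] by auto
  then show "(add_exp \<theta> \<beta>, i) \<in> vs (xv x n \<theta> f)"
    using cf_mult_lead[OF one_in_R \<theta> f K f_le] K
    by (simp add: xv_eq vsupp_iff)
  show "\<forall>L\<in>vs (xv x n \<theta> f). leM L (add_exp \<theta> \<beta>, i)"
    using vsupp_mult_le[OF one_in_R \<theta> f K f_le] by (simp add: xv_eq)
qed

lemma strictly_below_xv:
  assumes \<theta>: "\<theta> \<in> exps n" and h: "vec_in m h" and K: "(\<beta>, i) \<in> vmons"
    and below: "strictly_below (\<beta>, i) h"
  shows "strictly_below (add_exp \<theta> \<beta>, i) (xv x n \<theta> h)"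
  using strictly_below_mult[OF one_in_R \<theta> h K below] by (simp add: xv_eq)

lemma lm_below_xv:
  assumes \<theta>: "\<theta> \<in> exps n" and f: "vec_in m f" and h: "vec_in m h" and below: "lm_below h f"
  shows "lm_below (xv x n \<theta> h) (xv x n \<theta> f)"
proof (cases "h = (\<lambda>_. 0)")
  case True
  then show ?thesis by (simp add: lm_below_def xv_def)
next
  case False
  then obtain \<beta> i where lm_f: "lm f = Some (\<beta>, i)"
    using below by (cases "lm f") (auto simp: lm_below_def)
  then show ?thesis
    using strictly_below_xv[OF \<theta> h lm_in_MM[OF lm_f]] lm_below_iff[OF h lm_f] below
      lm_below_iff[OF vec_in_xv[OF h] lm_xv[OF \<theta> f lm_f]]
    by simp
qed

text \<open>Multiplying the reduction step f - \<Sum> r_k x^(a_k) g_k by x^\<theta> produces the terms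
  x^\<theta> r_k x^(a_k) g_k; the correction collects their differences from the admissible terms
  \<sigma>^\<theta>(r_k) c_{\<theta>,a_k} x^(\<theta>+a_k) g_k.\<close>

definition xv_correction ::
    "(nat \<Rightarrow> nat) \<Rightarrow> nat \<Rightarrow> (nat \<Rightarrow> 'a) \<Rightarrow> (nat \<Rightarrow> nat \<Rightarrow> nat) \<Rightarrow> (nat \<Rightarrow> nat \<Rightarrow> 'a) \<Rightarrow> nat \<Rightarrow> 'a"
  where "xv_correction \<theta> t r a g = (\<lambda>j. \<Sum>k<t.
    (sigp \<theta> (r k) * cab R x n \<theta> (a k) * X (add_exp \<theta> (a k)) - X \<theta> * (r k * X (a k))) * g k j)"

lemma xv_reduct_eq:
  "xv x n \<theta> (\<lambda>j. f j - (\<Sum>k<t. r k * X (a k) * g k j)) =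
   (\<lambda>j. (xv x n \<theta> f j + xv_correction \<theta> t r a g j)
        - (\<Sum>k<t. (sigp \<theta> (r k) * cab R x n \<theta> (a k)) * X (add_exp \<theta> (a k)) * g k j))"
  by (simp add: xv_def xv_correction_def right_diff_distrib left_diff_distrib sum_distrib_left
      sum_subtractf mult.assoc)

lemma vec_in_xv_correction: "(\<And>k. k < t \<Longrightarrow> vec_in m (g k)) \<Longrightarrow> vec_in m (xv_correction \<theta> t r a g)"
  by (simp add: vec_in_def xv_correction_def)

lemma quasi_comm_xv_correction:
  assumes "quasi_comm R x n" and "\<theta> \<in> exps n" and "\<And>k. k < t \<Longrightarrow> r k \<in> R \<and> a k \<in> exps n"
  shows "xv_correction \<theta> t r a g = (\<lambda>_. 0)"
  unfolding xv_correction_def using assms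
  by (simp add: mult.assoc[symmetric] quasi_comm_xmon_mult)
    (simp add: mult.assoc quasi_comm_xmon_mult_xmon)

lemma strictly_below_xv_correction:
  assumes \<theta>: "\<theta> \<in> exps n" and K: "(add_exp \<theta> \<beta>, i) \<in> vmons"
    and A: "\<And>k. k < t \<Longrightarrow> r k \<in> R \<and> a k \<in> exps n \<and> vec_in m (g k) \<and> (\<gamma> k, i) \<in> vmons
      \<and> (\<forall>L\<in>vs (g k). leM L (\<gamma> k, i)) \<and> add_exp (a k) (\<gamma> k) = \<beta>"
  shows "strictly_below (add_exp \<theta> \<beta>, i) (xv_correction \<theta> t r a g)"
  unfolding xv_correction_def
proof (rule strictly_below_sum)
  fix k assume "k \<in> {..<t}"
  then have r: "r k \<in> R" and a: "a k \<in> exps n" and g: "vec_in m (g k)" "(\<gamma> k, i) \<in> vmons"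
    "\<forall>L\<in>vs (g k). leM L (\<gamma> k, i)" and \<beta>: "add_exp (a k) (\<gamma> k) = \<beta>"
    using A by auto
  have "X \<theta> * (r k * X (a k)) - (sigp \<theta> (r k) * cab R x n \<theta> (a k)) * X (add_exp \<theta> (a k))
      \<in> deg_lt (deg \<theta> + deg (a k))"
    using approx_mult_monom[OF \<theta> a one_in_R r] by simp
  then have "sigp \<theta> (r k) * cab R x n \<theta> (a k) * X (add_exp \<theta> (a k)) - X \<theta> * (r k * X (a k))
      \<in> deg_lt (deg \<theta> + deg (a k))"
    using deg_lt_diff[OF deg_lt_zero] by fastforce
  moreover have "deg \<theta> + deg (a k) + deg (\<gamma> k) \<le> deg (add_exp \<theta> \<beta>)"
    using \<beta> by (simp add: deg_exp_add[symmetric] add_exp_assoc)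
  ultimately show "strictly_below (add_exp \<theta> \<beta>, i) (\<lambda>j.
      (sigp \<theta> (r k) * cab R x n \<theta> (a k) * X (add_exp \<theta> (a k)) - X \<theta> * (r k * X (a k))) * g k j)"
    using deg_lt_mult_strictly_below vec_entry_deg_le[OF g] K by blast
qed

lemma red1_xv_add_correction:
  assumes F: "\<forall>g\<in>F. vec_in m g" and f: "vec_in m f" and \<theta>: "\<theta> \<in> exps n" and red: "red F f h"
    and lm_f: "lm f = Some (\<beta>, i)"
    and A: "\<And>k. k < t \<Longrightarrow> g k \<in> F \<and> r k \<in> R \<and> a k \<in> exps n
      \<and> lm (g k) = Some (\<gamma> k, i) \<and> add_exp (a k) (\<gamma> k) = \<beta>"
    and h: "h = (\<lambda>j. f j - (\<Sum>k<t. r k * X (a k) * g k j))"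
  shows "red F (\<lambda>j. xv x n \<theta> f j + xv_correction \<theta> t r a g j) (xv x n \<theta> h)"
proof -
  define r' where "r' k = sigp \<theta> (r k) * cab R x n \<theta> (a k)" for k
  define a' where "a' k = add_exp \<theta> (a k)" for k
  define f' where "f' = (\<lambda>j. xv x n \<theta> f j + xv_correction \<theta> t r a g j)"
  have K: "(add_exp \<theta> \<beta>, i) \<in> vmons" using lm_in_MM[OF lm_f] add_exp_exps[OF \<theta>] by auto
  have A': "g k \<in> F \<and> r' k \<in> R \<and> a' k \<in> exps n \<and> lm (g k) = Some (\<gamma> k, i)
      \<and> add_exp (a' k) (\<gamma> k) = add_exp \<theta> \<beta>" if "k < t" for k
    using A[OF that] sigma_pow_in_R[OF \<theta>] add_exp_exps[OF \<theta>]
    by (auto simp: r'_def a'_def add_exp_assoc cab_def)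
  have g: "vec_in m (g k) \<and> (\<gamma> k, i) \<in> vmons \<and> (\<forall>L\<in>vs (g k). leM L (\<gamma> k, i))
      \<and> lc (g k) = cf (g k i) (\<gamma> k)" if "k < t" for k
  proof -
    have "g k \<in> F" "lm (g k) = Some (\<gamma> k, i)" using A[OF that] by auto
    from reducer_lm_facts[OF F this] show ?thesis by blast
  qed
  have "strictly_below (add_exp \<theta> \<beta>, i) (xv_correction \<theta> t r a g)"
    by (rule strictly_below_xv_correction[OF \<theta> K]) (use A g in blast)
  note lm_f' = lm_add_strictly_below[OF lm_xv[OF \<theta> f lm_f] this, folded f'_def]
  have h_eq: "xv x n \<theta> h = (\<lambda>j. f' j - (\<Sum>k<t. r' k * X (a' k) * g k j))"
    unfolding h xv_reduct_eq f'_def r'_def a'_def ..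
  have "cf (xv x n \<theta> h i) (add_exp \<theta> \<beta>) = 0"
    using strictly_below_xv[OF \<theta> red1_vec_in[OF F f red] lm_in_MM[OF lm_f]]
      red1_lm_below[OF F f red] lm_below_iff[OF red1_vec_in[OF F f red] lm_f] K
    by (auto simp: strictly_below_def vsupp_iff)
  then have "lc f' = (\<Sum>k<t. cf (r' k * X (a' k) * g k i) (add_exp \<theta> \<beta>))"
    using lc_eq[OF lm_f'(1)] by (simp add: h_eq cf_diff cf_sum)
  also have "\<dots> = (\<Sum>k<t. r' k * sigp (a' k) (lc (g k)) * cab R x n (a' k) (\<gamma> k))"
  proof (rule sum.cong)
    fix k assume "k \<in> {..<t}"
    then have "r' k \<in> R" "a' k \<in> exps n" "add_exp (a' k) (\<gamma> k) = add_exp \<theta> \<beta>"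
      and gk: "vec_in m (g k)" "(\<gamma> k, i) \<in> vmons" "\<forall>L\<in>vs (g k). leM L (\<gamma> k, i)"
        "lc (g k) = cf (g k i) (\<gamma> k)"
      using A' g by auto
    then show "cf (r' k * X (a' k) * g k i) (add_exp \<theta> \<beta>)
        = r' k * sigp (a' k) (lc (g k)) * cab R x n (a' k) (\<gamma> k)"
      using cf_mult_lead[OF _ _ gk(1-3), of "r' k" "a' k"] by simp
  qed simp
  finally show ?thesis
    unfolding f'_def[symmetric] using A' by (intro red1_nonzeroI[OF lm_f'(3,1) _ _ h_eq]) auto
qed

lemma red1_xmon_mult:
  assumes F: "\<forall>g\<in>F. vec_in m g" and f: "vec_in m f" and \<theta>: "\<theta> \<in> exps n" and red: "red F f h"
  shows "\<exists>p. vec_in m p \<and> lm_below p (xv x n \<theta> f) \<and> red F (\<lambda>j. xv x n \<theta> f j + p j) (xv x n \<theta> h)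
    \<and> (quasi_comm R x n \<longrightarrow> p = (\<lambda>_. 0))"
proof (cases "f = (\<lambda>_. 0)")
  case True
  then have "xv x n \<theta> f = (\<lambda>_. 0)" "xv x n \<theta> h = (\<lambda>_. 0)"
    using red red1_from_0 by (auto simp: xv_def)
  then show ?thesis
    using red1_from_0 by (intro exI[of _ "\<lambda>_. 0"]) (simp add: vec_in_def lm_below_def)
next
  case False
  then obtain \<beta> i where lm_f: "lm f = Some (\<beta>, i)" using lm_None_iff[OF f] by (cases "lm f") auto
  obtain t :: nat and g r a \<gamma> where A: "\<And>k. k < t \<Longrightarrow> g k \<in> F \<and> r k \<in> R \<and> a k \<in> exps n
      \<and> lm (g k) = Some (\<gamma> k, i) \<and> add_exp (a k) (\<gamma> k) = \<beta>"
    and h: "h = (\<lambda>j. f j - (\<Sum>k<t. r k * X (a k) * g k j))"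
    by (rule red1_nonzeroE[OF red False lm_f]) (rule that)
  note red' = red1_xv_add_correction[OF F f \<theta> red lm_f A h]
  define p where "p = xv_correction \<theta> t r a g"
  have g: "r k \<in> R \<and> a k \<in> exps n \<and> vec_in m (g k) \<and> (\<gamma> k, i) \<in> vmons
      \<and> (\<forall>L\<in>vs (g k). leM L (\<gamma> k, i)) \<and> add_exp (a k) (\<gamma> k) = \<beta>" if "k < t" for k
  proof -
    have "g k \<in> F" "lm (g k) = Some (\<gamma> k, i)" using A[OF that] by auto
    from reducer_lm_facts[OF F this] show ?thesis using A[OF that] by blast
  qed
  have p: "vec_in m p" unfolding p_def by (rule vec_in_xv_correction) (use g in blast)
  have K: "(add_exp \<theta> \<beta>, i) \<in> vmons" using lm_in_MM[OF lm_f] add_exp_exps[OF \<theta>] by auto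
  have "strictly_below (add_exp \<theta> \<beta>, i) p"
    unfolding p_def by (rule strictly_below_xv_correction[OF \<theta> K]) (use g in blast)
  then have "lm_below p (xv x n \<theta> f)"
    using lm_below_iff[OF p lm_xv[OF \<theta> f lm_f]] by simp
  moreover have "p = (\<lambda>_. 0)" if q: "quasi_comm R x n"
    unfolding p_def by (rule quasi_comm_xv_correction[OF q \<theta>]) (use g in blast)
  ultimately show ?thesis using p red' unfolding p_def by blast
qed

lemma redp_add_lm_below:
  assumes F: "\<forall>g\<in>F. vec_in m g"
  shows "(red F)\<^sup>+\<^sup>+ f h \<Longrightarrow> vec_in m f \<Longrightarrow> vec_in m p \<Longrightarrow> lm_below p h \<Longrightarrow>
    (red F)\<^sup>+\<^sup>+ (\<lambda>j. f j + p j) (\<lambda>j. h j + p j)"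
proof (induction arbitrary: p rule: tranclp_induct)
  case (base h)
  have "lm_below p f"
    using lm_below_trans[OF red1_vec_in[OF F base.prems(1) base.hyps] base.prems(2)]
      red1_lm_below[OF F base.prems(1) base.hyps] base.prems(3) .
  then show ?case using red1_add_lm_below[OF base.prems(1,2) base.hyps] by blast
next
  case (step y z)
  have y: "vec_in m y" using redp_vec_in[OF F step.hyps(1) step.prems(1)] .
  have "lm_below p y"
    using lm_below_trans[OF red1_vec_in[OF F y step.hyps(2)] step.prems(2)]
      red1_lm_below[OF F y step.hyps(2)] step.prems(3) .
  then show ?case
    using step.IH[OF step.prems(1,2)] red1_add_lm_below[OF y step.prems(2) step.hyps(2)]
    by (meson tranclp.trancl_into_trancl)
qed

lemma redp_xmon_mult:
  assumes F: "\<forall>g\<in>F. vec_in m g" and \<theta>: "\<theta> \<in> exps n"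
  shows "(red F)\<^sup>+\<^sup>+ f h \<Longrightarrow> vec_in m f \<Longrightarrow> \<exists>p. vec_in m p \<and> lm_below p (xv x n \<theta> f)
    \<and> (red F)\<^sup>+\<^sup>+ (\<lambda>j. xv x n \<theta> f j + p j) (xv x n \<theta> h)"
proof (induction rule: converse_tranclp_induct)
  case (base f)
  then show ?case using red1_xmon_mult[OF F base.prems \<theta> base.hyps] by blast
next
  case (step f y)
  have y: "vec_in m y" using red1_vec_in[OF F step.prems step.hyps(1)] .
  obtain q where q: "vec_in m q" "lm_below q (xv x n \<theta> y)"
    "(red F)\<^sup>+\<^sup>+ (\<lambda>j. xv x n \<theta> y j + q j) (xv x n \<theta> h)"
    using step.IH[OF y] by blast
  obtain p where p: "vec_in m p" "lm_below p (xv x n \<theta> f)"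
    "red F (\<lambda>j. xv x n \<theta> f j + p j) (xv x n \<theta> y)"
    using red1_xmon_mult[OF F step.prems \<theta> step.hyps(1)] by blast
  have xf: "vec_in m (xv x n \<theta> f)" and xy: "vec_in m (xv x n \<theta> y)"
    using vec_in_xv step.prems y by auto
  have y_below: "lm_below (xv x n \<theta> y) (xv x n \<theta> f)"
    using lm_below_xv[OF \<theta> step.prems y red1_lm_below[OF F step.prems step.hyps(1)]] .
  have q_below: "lm_below q (\<lambda>j. xv x n \<theta> f j + p j)"
    using lm_below_trans[OF xy q(1) y_below q(2)] lm_add_lm_below[OF p(1,2)] by (simp add: lm_below_def)
  have "red F (\<lambda>j. xv x n \<theta> f j + (p j + q j)) (\<lambda>j. xv x n \<theta> y j + q j)"
    using red1_add_lm_below[OF vec_in_add[OF xf p(1)] q(1) p(3) q_below] by (simp add: add.assoc)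
  then have "(red F)\<^sup>+\<^sup>+ (\<lambda>j. xv x n \<theta> f j + (p j + q j)) (xv x n \<theta> h)"
    using q(3) by (rule tranclp_into_tranclp2)
  moreover have "lm_below (\<lambda>j. p j + q j) (xv x n \<theta> f)"
    using lm_below_add[OF p(1) q(1) p(2) lm_below_trans[OF xy q(1) y_below q(2)]] .
  ultimately show ?case using vec_in_add[OF p(1) q(1)] by blast
qed

lemma red1_xmon_mult_quasi_comm:
  assumes "\<forall>g\<in>F. vec_in m g" and "vec_in m f" and "\<theta> \<in> exps n" and "quasi_comm R x n"
    and "red F f h"
  shows "red F (xv x n \<theta> f) (xv x n \<theta> h)"
  using red1_xmon_mult[OF assms(1,2,3,5)] assms(4) by fastforce

lemma redp_xmon_mult_quasi_comm:
  assumes F: "\<forall>g\<in>F. vec_in m g" and \<theta>: "\<theta> \<in> exps n" and q: "quasi_comm R x n"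
  shows "(red F)\<^sup>+\<^sup>+ f h \<Longrightarrow> vec_in m f \<Longrightarrow> (red F)\<^sup>+\<^sup>+ (xv x n \<theta> f) (xv x n \<theta> h)"
proof (induction rule: converse_tranclp_induct)
  case (base f)
  then show ?case using red1_xmon_mult_quasi_comm[OF F base.prems \<theta> q base.hyps] by blast
next
  case (step f y)
  have "red F (xv x n \<theta> f) (xv x n \<theta> y)"
    using red1_xmon_mult_quasi_comm[OF F step.prems \<theta> q step.hyps(1)] .
  then show ?case using step.IH[OF red1_vec_in[OF F step.prems step.hyps(1)]]
    by (rule tranclp_into_tranclp2)
qed

end

lemma red1_trivial_ring:
  assumes "(1::'a::ring_1) = 0"
  shows "red1 R x n m leM F (f :: nat \<Rightarrow> 'a) h"
proof -
  have "v = (\<lambda>_. 0)" for v :: "nat \<Rightarrow> 'a"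
    using assms by (metis mult_1_right mult_zero_right ext)
  then show ?thesis by (simp add: red1_def)
qed

theorem proposition22:
  fixes R :: "'a::ring_1 set" and x :: "nat \<Rightarrow> 'a" and n m :: nat
    and le :: "(nat \<Rightarrow> nat) \<Rightarrow> (nat \<Rightarrow> nat) \<Rightarrow> bool"
    and leM :: "(nat \<Rightarrow> nat) \<times> nat \<Rightarrow> (nat \<Rightarrow> nat) \<times> nat \<Rightarrow> bool"
    and F :: "(nat \<Rightarrow> 'a) set" and f h :: "nat \<Rightarrow> 'a" and \<theta> :: "nat \<Rightarrow> nat"
  assumes pbw: "sigma_PBW R x n"
    and noeth: "left_noetherian R"
    and ordA: "mon_order_A R x n le"
    and ordM: "mon_order_M R x n m le leM"
    and cinv: "\<forall>\<alpha>\<in>exps n. \<forall>\<beta>\<in>exps n. unit_in R (cab R x n \<alpha> \<beta>)"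
    and Ffin: "finite F"
    and Fvec: "\<forall>g\<in>F. vec_in m g \<and> g \<noteq> (\<lambda>_. 0)"
    and fvec: "vec_in m f" and hvec: "vec_in m h"
    and theta: "\<theta> \<in> exps n"
  shows
    "(red1 R x n m leM F f h \<longrightarrow>
        (\<exists>p. vec_in m p \<and> (p = (\<lambda>_. 0) \<or> mgt leM (lmv R x n m leM (xv x n \<theta> f)) (lmv R x n m leM p))
             \<and> red1 R x n m leM F (\<lambda>i. xv x n \<theta> f i + p i) (xv x n \<theta> h))
      \<and> (quasi_comm R x n \<longrightarrow> red1 R x n m leM F (xv x n \<theta> f) (xv x n \<theta> h)))
   \<and> (redp R x n m leM F f h \<longrightarrow>
        (\<forall>p. vec_in m p \<and> (p = (\<lambda>_. 0) \<or> mgt leM (lmv R x n m leM h) (lmv R x n m leM p)) \<longrightarrow>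
             redp R x n m leM F (\<lambda>i. f i + p i) (\<lambda>i. h i + p i)))
   \<and> (redp R x n m leM F f h \<longrightarrow>
        (\<exists>p. vec_in m p \<and> (p = (\<lambda>_. 0) \<or> mgt leM (lmv R x n m leM (xv x n \<theta> f)) (lmv R x n m leM p))
             \<and> redp R x n m leM F (\<lambda>i. xv x n \<theta> f i + p i) (xv x n \<theta> h))
      \<and> (quasi_comm R x n \<longrightarrow> redp R x n m leM F (xv x n \<theta> f) (xv x n \<theta> h)))
   \<and> (redp R x n m leM F f (\<lambda>_. 0) \<longrightarrow>
        (\<exists>p. vec_in m p \<and> (p = (\<lambda>_. 0) \<or> mgt leM (lmv R x n m leM (xv x n \<theta> f)) (lmv R x n m leM p))
             \<and> redp R x n m leM F (\<lambda>i. xv x n \<theta> f i + p i) (\<lambda>_. 0))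
      \<and> (quasi_comm R x n \<longrightarrow> redp R x n m leM F (xv x n \<theta> f) (\<lambda>_. 0)))"
proof (cases "(1::'a) = 0")
  case True
  then have "red1 R x n m leM F u v" for u v by (rule red1_trivial_ring)
  moreover have "vec_in m (\<lambda>_. 0 :: 'a)" by (simp add: vec_in_def)
  ultimately show ?thesis unfolding redp_def by blast
next
  case False
  interpret sigma_pbw_ordered R x n m le leM
    using pbw ordA ordM cinv False by unfold_locales
  have F: "\<forall>g\<in>F. vec_in m g" using Fvec by blast
  have xv_0: "xv x n \<theta> (\<lambda>_. 0) = (\<lambda>_. 0)" by (simp add: xv_def)
  note redp_xmon = redp_xmon_mult[OF F theta _ fvec] redp_xmon_mult_quasi_comm[OF F theta _ _ fvec]
  show ?thesis
    using red1_xmon_mult[OF F fvec theta] red1_xmon_mult_quasi_comm[OF F fvec theta]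
      redp_add_lm_below[OF F _ fvec] redp_xmon redp_xmon[of "\<lambda>_. 0", unfolded xv_0]
    unfolding redp_def lm_below_def by blast
qed

end
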